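(* Assume the Slater condition: there is a positive definite $X^0\in\mathbb{S}^n$ with $\mathcal{R}_\alpha(X^0)=\mathcal{R}_\alpha(\overline X)$. If $\rho_m\to0$, $\sqrt m\,\rho_m\to\infty$ and $\gamma_m=O_p(1)$, then $\widehat\Delta_m:=\rho_m^{-1}(\widehat X_m-\overline X)\xrightarrow{p}\widehat\Delta$, where $\widehat\Delta$ is the unique optimal solution of $$\min_{\Delta\in\mathbb{S}^n}\ \frac12\langle\mathcal{Q}_\beta(\Delta),\Delta\rangle+\langle I_n-F(\overline X),\Delta\rangle\quad\text{s.t. }\mathcal{R}_\alpha(\Delta)=0,\ \overline P_2^{\mathbb{T}}\Delta\overline P_2\ \text{positive semidefinite}.$$
   Context: Positive semidefinite setting: $\mathbb{S}^n$ denotes either the real symmetric or the Hermitian $n\times n$ matrices, a real inner product space with $\langle X,Y\rangle=\mathrm{Re}\,\mathrm{Tr}(X^{\mathbb{T}}Y)$ ($^{\mathbb{T}}$ = transpose or conjugate transpose); $\|\cdot\|_F$ is the Frobenius norm. $\{\Theta_1,\dots,\Theta_d\}$ is an orthonormal basis of $\mathbb{S}^n$, $\alpha\subseteq\{1,\dots,d\}$, $\beta$ its complement, $\mathcal{R}_\pi(X)=(\langle\Theta_k,X\rangle)_{k\in\pi}$. Let $p_k>0$ ($k\in\beta$), $\sum_{k\in\beta}p_k=1$, $\mathcal{Q}_\beta(X)=\sum_{k\in\beta}p_k\langle\Theta_k,X\rangle\Theta_k$. The unknown $\overline X$ is positive semidefinite of rank $r\ge1$, with eigendecomposition $\overline X=\overline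 P\mathrm{Diag}(\lambda(\overline X))\overline P^{\mathbb{T}}$, eigenvalues nonincreasing, $\overline P=[\overline P_1\ \overline P_2]$ orthogonal/unitary, $\overline P_1$ having $r$ columns. Observations: $\omega_1,\dots,\omega_m$ i.i.d. with $\Pr(\omega_i=k)=p_k$ for $k\in\beta$, $0$ for $k\in\alpha$; $\xi_i$ i.i.d., independent of the $\omega_i$, $\mathbb{E}\xi_i=0$, $\mathbb{E}\xi_i^2=1$; $\nu>0$; $y_i=\langle\Theta_{\omega_i},\overline X\rangle+\nu\xi_i$; $\mathcal{R}_\Omega(X)=(\langle\Theta_{\omega_i},X\rangle)_{i=1}^m$. $F$ is the spectral operator of a symmetric function $f:\mathbb{R}^n\to\mathbb{R}^n$ ($f(x)=Q^{\mathbb{T}}f(Qx)$ for all signed permutation matrices $Q$); for positive semidefinite $X=P\mathrm{Diag}(\lambda(X))P^{\mathbb{T}}$, $F(X)=P\mathrm{Diag}(f(\lambda(X)))P^{\mathbb{T}}$. Given a positive semidefinite initial estimator $\widetilde X_m$, $\rho_m>0$, $\gamma_m\ge0$, $\widehat X_m$ is an optimal solution of $$\min_{X\in\mathbb{S}^n}\ \frac1{2m}\|y-\mathcal{R}_\Omega(X)\|_2^2+\rho_m\Big(\langle I_n-F(\widetilde X_m),X\rangle+\frac{\gamma_m}2\|X-\widetilde X_m\|_F^2\Big)\ \text{s.t. }\mathcal{R}_\alpha(X)=\mathcal{R}_\alpha(\overline X),\ X\text{ positive semidefinite}.$$ Standing assumptions: $n$ fixed, $m\to\infty$; $F$ continuous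 at $\overline X$; $\widetilde X_m\xrightarrow{p}\overline X$. *)

theory Defs
  imports "HOL-Probability.Probability"
begin

text \<open>The space S^n is either the real symmetric matrices (realcase = True, embedded as
  Hermitian matrices with real entries) or the Hermitian matrices (realcase = False).\<close>

type_synonym 'n cmat = "((complex, 'n) vec, 'n) vec"

definition ctrans :: "('n::finite) cmat \<Rightarrow> 'n cmat" where
  "ctrans A = (\<chi> i j. cnj (A $ j $ i))"

definition herm :: "('n::finite) cmat \<Rightarrow> bool" where
  "herm A \<longleftrightarrow> ctrans A = A"

definition Sn :: "bool \<Rightarrow> ('n::finite) cmat set" where
  "Sn realcase = {X. herm X \<and> (realcase \<longrightarrow> (\<forall>i j. Im (X $ i $ j) = 0))}"

definition mtrace :: "('n::finite) cmat \<Rightarrow> complex" where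
  "mtrace A = (\<Sum>i\<in>UNIV. A $ i $ i)"

definition minner :: "('n::finite) cmat \<Rightarrow> 'n cmat \<Rightarrow> real" where
  "minner X Y = Re (mtrace (ctrans X ** Y))"

definition qform :: "('n::finite) cmat \<Rightarrow> (complex, 'n) vec \<Rightarrow> complex" where
  "qform X v = (\<Sum>i\<in>UNIV. \<Sum>j\<in>UNIV. cnj (v $ i) * X $ i $ j * v $ j)"

definition psd :: "('n::finite) cmat \<Rightarrow> bool" where
  "psd X \<longleftrightarrow> herm X \<and> (\<forall>v. Re (qform X v) \<ge> 0)"

definition pd :: "('n::finite) cmat \<Rightarrow> bool" where
  "pd X \<longleftrightarrow> herm X \<and> (\<forall>v. v \<noteq> 0 \<longrightarrow> Re (qform X v) > 0)"

definition unitary :: "('n::finite) cmat \<Rightarrow> bool" where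
  "unitary P \<longleftrightarrow> ctrans P ** P = mat 1"

definition diagm :: "(real, 'n::finite) vec \<Rightarrow> 'n cmat" where
  "diagm v = (\<chi> i j. if i = j then complex_of_real (v $ i) else 0)"

definition nonincr :: "(real, 'n::{finite,linorder}) vec \<Rightarrow> bool" where
  "nonincr v \<longleftrightarrow> (\<forall>i j. i \<le> j \<longrightarrow> v $ j \<le> v $ i)"

definition eigvals :: "('n::{finite,linorder}) cmat \<Rightarrow> (real, 'n) vec" where
  "eigvals X = (SOME l. nonincr l \<and> (\<exists>P. unitary P \<and> X = P ** diagm l ** ctrans P))"

definition signed_perm :: "((real, 'n::finite) vec, 'n) vec \<Rightarrow> bool" where
  "signed_perm Q \<longleftrightarrow> (\<exists>\<sigma> s. \<sigma> permutes (UNIV::'n set) \<and> (\<forall>i. s i = 1 \<or> s i = -1) \<and>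
      Q = (\<chi> i j. if j = \<sigma> i then s i else 0))"

definition symmetric_fun :: "((real, 'n::finite) vec \<Rightarrow> (real, 'n) vec) \<Rightarrow> bool" where
  "symmetric_fun f \<longleftrightarrow> (\<forall>Q x. signed_perm Q \<longrightarrow> f x = transpose Q *v f (Q *v x))"

definition spectral_op :: "((real, 'n::{finite,linorder}) vec \<Rightarrow> (real, 'n) vec) \<Rightarrow> 'n cmat \<Rightarrow> 'n cmat" where
  "spectral_op f X = (SOME M. \<exists>P. unitary P \<and> X = P ** diagm (eigvals X) ** ctrans P \<and>
      M = P ** diagm (f (eigvals X)) ** ctrans P)"

definition conv_prob :: "'a measure \<Rightarrow> (nat \<Rightarrow> 'a \<Rightarrow> 'b::metric_space) \<Rightarrow> 'b \<Rightarrow> bool" where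
  "conv_prob M Z L \<longleftrightarrow> (\<forall>e>0. (\<lambda>m. measure M {w\<in>space M. dist (Z m w) L > e}) \<longlonglongrightarrow> 0)"

definition bounded_prob :: "'a measure \<Rightarrow> (nat \<Rightarrow> 'a \<Rightarrow> real) \<Rightarrow> bool" where
  "bounded_prob M g \<longleftrightarrow> (\<forall>e>0. \<exists>K N. \<forall>m\<ge>N. measure M {w\<in>space M. \<bar>g m w\<bar> > K} < e)"

text \<open>Index of an element of 'n in the linear order (0-based); the first r columns of P
  are those with index < r.\<close>
definition pos :: "'n::{finite,linorder} \<Rightarrow> nat" where
  "pos i = card {j. j < i}"

text \<open>The (n-r) x (n-r) matrix P_2^T D P_2, padded with zeros to an n x n matrix.\<close>
definition lower_block :: "nat \<Rightarrow> ('n::{finite,linorder}) cmat \<Rightarrow> 'n cmat \<Rightarrow> 'n cmat" where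
  "lower_block r P D = (\<chi> i j. if r \<le> pos i \<and> r \<le> pos j then (ctrans P ** D ** P) $ i $ j else 0)"

definition Qbeta :: "(nat \<Rightarrow> ('n::finite) cmat) \<Rightarrow> nat set \<Rightarrow> (nat \<Rightarrow> real) \<Rightarrow> 'n cmat \<Rightarrow> 'n cmat" where
  "Qbeta \<Theta> \<beta> p X = (\<Sum>k\<in>\<beta>. (p k * minner (\<Theta> k) X) *\<^sub>R \<Theta> k)"

definition est_obj :: "(nat \<Rightarrow> ('n::{finite,linorder}) cmat) \<Rightarrow> ((real, 'n) vec \<Rightarrow> (real, 'n) vec) \<Rightarrow> nat
    \<Rightarrow> (nat \<Rightarrow> real) \<Rightarrow> (nat \<Rightarrow> nat) \<Rightarrow> real \<Rightarrow> real \<Rightarrow> 'n cmat \<Rightarrow> 'n cmat \<Rightarrow> real" where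
  "est_obj \<Theta> f m y om rho gam Xt X =
     (1 / (2 * real m)) * (\<Sum>i<m. (y i - minner (\<Theta> (om i)) X)\<^sup>2)
     + rho * (minner (mat 1 - spectral_op f Xt) X + gam / 2 * (norm (X - Xt))\<^sup>2)"

definition limit_obj :: "(nat \<Rightarrow> ('n::{finite,linorder}) cmat) \<Rightarrow> nat set \<Rightarrow> (nat \<Rightarrow> real)
    \<Rightarrow> ((real, 'n) vec \<Rightarrow> (real, 'n) vec) \<Rightarrow> 'n cmat \<Rightarrow> 'n cmat \<Rightarrow> real" where
  "limit_obj \<Theta> \<beta> p f Xbar D = 1/2 * minner (Qbeta \<Theta> \<beta> p D) D + minner (mat 1 - spectral_op f Xbar) D"

end

theory Submission
  imports Defs
begin

text \<open>Write \<open>X = Xbar + \<rho> D\<close>. Up to a constant and the factor \<open>\<rho>\<^sup>2\<close> the estimation objective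
  becomes a random function \<open>\<psi>\<^sub>m(D)\<close> of the rescaled error \<open>D\<close>; its difference from the limit
  objective \<open>\<phi>(D) = \<langle>Q\<^sub>\<beta> D, D\<rangle>/2 + \<langle>I - F(Xbar), D\<rangle>\<close> is bounded by \<open>a \<parallel>D\<parallel>\<^sup>2 + b \<parallel>D\<parallel>\<close>, where \<open>a\<close>
  collects the deviations of the empirical sampling frequencies from \<open>p\<close> and \<open>\<rho>\<gamma>\<close>, and \<open>b\<close>
  collects the noise average divided by \<open>\<rho>\<close>, \<open>\<parallel>F(Xt) - F(Xbar)\<parallel>\<close> and \<open>\<gamma> \<parallel>Xt - Xbar\<parallel>\<close>.
  Chebyshev's inequality for sums of uncorrelated variables (the sampling is i.i.d.), together
  with \<open>\<rho> \<rightarrow> 0\<close>, \<open>\<surd>m \<rho> \<rightarrow> \<infinity>\<close>, \<open>\<gamma> = O\<^sub>p(1)\<close> and \<open>Xt \<rightarrow> Xbar\<close> in probability, makes \<open>a\<close>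
  and \<open>b\<close> small with probability tending to one.

  Every feasible rescaled error lies in the cone \<open>K\<close> of directions with \<open>R\<^sub>\<alpha> D = 0\<close> and
  \<open>P\<^sub>2\<^sup>T D P\<^sub>2\<close> positive semidefinite. Since the \<open>p\<^sub>k\<close> are positive and the \<open>\<Theta>\<^sub>k\<close> are orthonormal, \<open>\<phi>\<close>
  is strongly convex on \<open>K\<close>, so it has a unique minimiser \<open>D\<^sub>h\<close> and grows quadratically away from
  it. Conversely, by the Slater point, \<open>D\<^sub>h\<close> is approximated by directions \<open>H\<close> that are feasible
  for all small \<open>\<rho>\<close>. Comparing \<open>\<psi>\<^sub>m\<close> at its minimiser and at \<open>H\<close> then pins the minimiser of
  \<open>\<psi>\<^sub>m\<close> near \<open>D\<^sub>h\<close>.\<close>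

section \<open>Hermitian matrices and quadratic forms\<close>

lemma minner_inner: "minner X Y = inner X Y"
proof -
  have "minner X Y = Re (\<Sum>i\<in>UNIV. \<Sum>k\<in>UNIV. cnj (X $ k $ i) * Y $ k $ i)"
    unfolding minner_def mtrace_def ctrans_def by (simp add: matrix_matrix_mult_def)
  also have "\<dots> = (\<Sum>i\<in>UNIV. \<Sum>k\<in>UNIV. Re (cnj (X $ k $ i) * Y $ k $ i))"
    by (simp add: Re_sum)
  also have "\<dots> = (\<Sum>k\<in>UNIV. \<Sum>i\<in>UNIV. Re (cnj (X $ k $ i) * Y $ k $ i))"
    by (rule sum.swap)
  also have "\<dots> = inner X Y"
    unfolding inner_vec_def by (simp add: inner_complex_def)
  finally show ?thesis .
qed

lemma ctrans_ctrans [simp]: "ctrans (ctrans A) = A"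
  by (simp add: ctrans_def vec_eq_iff)

lemma ctrans_mult: "ctrans (A ** B) = ctrans B ** ctrans A"
  by (simp add: ctrans_def vec_eq_iff matrix_matrix_mult_def mult.commute)

lemma ctrans_add: "ctrans (A + B) = ctrans A + ctrans B"
  by (simp add: ctrans_def vec_eq_iff)

lemma ctrans_diff: "ctrans (A - B) = ctrans A - ctrans B"
  by (simp add: ctrans_def vec_eq_iff)

lemma ctrans_scaleR: "ctrans (c *\<^sub>R A) = c *\<^sub>R ctrans A"
  by (simp add: ctrans_def vec_eq_iff)

lemma unitary_right: "unitary P \<Longrightarrow> P ** ctrans P = mat 1"
  unfolding unitary_def using matrix_left_right_inverse by blast

lemma herm_add: "herm A \<Longrightarrow> herm B \<Longrightarrow> herm (A + B)"
  by (simp add: herm_def ctrans_add)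

lemma herm_diff: "herm A \<Longrightarrow> herm B \<Longrightarrow> herm (A - B)"
  by (simp add: herm_def ctrans_diff)

lemma herm_scaleR: "herm A \<Longrightarrow> herm (c *\<^sub>R A)"
  by (simp add: herm_def ctrans_scaleR)

lemma Sn_add: "A \<in> Sn b \<Longrightarrow> B \<in> Sn b \<Longrightarrow> A + B \<in> Sn b"
  by (simp add: Sn_def herm_add)

lemma Sn_diff: "A \<in> Sn b \<Longrightarrow> B \<in> Sn b \<Longrightarrow> A - B \<in> Sn b"
  by (simp add: Sn_def herm_diff)

lemma Sn_scaleR: "A \<in> Sn b \<Longrightarrow> c *\<^sub>R A \<in> Sn b"
  by (simp add: Sn_def herm_scaleR)

lemma Sn_zero: "0 \<in> Sn b"
  by (simp add: Sn_def herm_def ctrans_def vec_eq_iff)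

lemma closed_Sn: "closed (Sn b :: ('n::finite) cmat set)"
proof -
  have eq: "Sn b = {X. ctrans X = X} \<inter> {X. b \<longrightarrow> (\<forall>i j. Im (X $ i $ j) = 0)}"
    by (auto simp: Sn_def herm_def)
  have "closed {X::'n cmat. ctrans X = X}"
    unfolding ctrans_def by (intro closed_Collect_eq continuous_intros)
  moreover have "closed {X::'n cmat. b \<longrightarrow> (\<forall>i j. Im (X $ i $ j) = 0)}"
    by (cases b) (auto intro!: closed_Collect_all closed_Collect_eq continuous_intros)
  ultimately show ?thesis unfolding eq by (rule closed_Int)
qed

lemma qform_mult_vec: "qform X v = (\<Sum>i\<in>UNIV. cnj (v $ i) * (X *v v) $ i)"
  by (simp add: qform_def matrix_vector_mult_def sum_distrib_left mult.assoc)

lemma qform_add: "qform (A + B) v = qform A v + qform B v"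
  by (simp add: qform_def sum.distrib distrib_left distrib_right)

lemma qform_diff: "qform (A - B) v = qform A v - qform B v"
  by (simp add: qform_def sum_subtractf left_diff_distrib right_diff_distrib)

lemma qform_scaleR: "qform (c *\<^sub>R A) v = of_real c * qform A v"
  by (simp add: qform_def sum_distrib_left scaleR_conv_of_real[where 'a=complex] mult_ac)

lemma qform_scaleR_vec: "qform X (c *\<^sub>R u) = of_real (c\<^sup>2) * qform X u"
  unfolding qform_def
  by (simp add: scaleR_conv_of_real[where 'a=complex] sum_distrib_left power2_eq_square mult_ac)

lemma qform_congruence: "qform (ctrans P ** D ** P) v = qform D (P *v v)"
proof -
  have "qform (ctrans P ** D ** P) v = (\<Sum>i\<in>UNIV. cnj (v $ i) * (ctrans P *v (D *v (P *v v))) $ i)"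
    by (simp add: qform_mult_vec matrix_vector_mul_assoc matrix_mul_assoc)
  also have "\<dots> = (\<Sum>i\<in>UNIV. \<Sum>j\<in>UNIV. cnj (v $ i) * (cnj (P $ j $ i) * (D *v (P *v v)) $ j))"
    by (simp add: matrix_vector_mult_def ctrans_def sum_distrib_left)
  also have "\<dots> = (\<Sum>j\<in>UNIV. \<Sum>i\<in>UNIV. cnj (v $ i) * (cnj (P $ j $ i) * (D *v (P *v v)) $ j))"
    by (rule sum.swap)
  also have "\<dots> = (\<Sum>j\<in>UNIV. cnj ((P *v v) $ j) * (D *v (P *v v)) $ j)"
    by (simp add: matrix_vector_mult_def sum_distrib_right mult_ac)
  finally show ?thesis by (simp add: qform_mult_vec)
qed

lemma qform_diagm: "qform (diagm l) v = of_real (\<Sum>i\<in>UNIV. l $ i * (cmod (v $ i))\<^sup>2)"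
proof -
  have "qform (diagm l) v = (\<Sum>i\<in>UNIV. cnj (v $ i) * of_real (l $ i) * v $ i)"
    unfolding qform_def diagm_def by (simp add: if_distrib if_distribR sum.delta cong: if_cong)
  also have "\<dots> = (\<Sum>i\<in>UNIV. of_real (l $ i * (cmod (v $ i))\<^sup>2))"
    by (intro sum.cong refl) (simp add: complex_norm_square mult_ac del: of_real_power)
  finally show ?thesis by simp
qed

lemma norm_sq_vec: "(norm (v :: (complex, 'n::finite) vec))\<^sup>2 = (\<Sum>i\<in>UNIV. (cmod (v $ i))\<^sup>2)"
  unfolding norm_vec_def L2_set_def by (simp add: sum_nonneg)

lemma qform_mat1: "qform (mat 1) w = of_real ((norm w)\<^sup>2)"
proof -
  have "qform (mat 1) w = (\<Sum>i\<in>UNIV. cnj (w $ i) * w $ i)"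
    unfolding qform_def mat_def by (simp add: if_distrib if_distribR cong: if_cong)
  also have "\<dots> = of_real (\<Sum>i\<in>UNIV. (cmod (w $ i))\<^sup>2)"
    by (simp add: complex_norm_square mult.commute del: of_real_power)
  finally show ?thesis by (simp add: norm_sq_vec)
qed

lemma unitary_norm: "unitary P \<Longrightarrow> norm (P *v w) = norm w"
proof -
  assume u: "unitary P"
  have "of_real ((norm (P *v w))\<^sup>2) = qform (mat 1) (P *v w)" by (rule qform_mat1[symmetric])
  also have "\<dots> = qform (ctrans P ** mat 1 ** P) w" by (rule qform_congruence[symmetric])
  also have "\<dots> = of_real ((norm w)\<^sup>2)" using u by (simp add: unitary_def qform_mat1)
  finally have "(norm (P *v w))\<^sup>2 = (norm w)\<^sup>2" using of_real_eq_iff by blast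
  then show ?thesis by (simp add: power2_eq_iff_nonneg)
qed

definition sesq :: "('n::finite) cmat \<Rightarrow> (complex, 'n) vec \<Rightarrow> (complex, 'n) vec \<Rightarrow> complex" where
  "sesq A x y = (\<Sum>i\<in>UNIV. \<Sum>j\<in>UNIV. cnj (x $ i) * A $ i $ j * y $ j)"

lemma qform_add_vec: "qform A (x + y) = qform A x + sesq A x y + sesq A y x + qform A y"
  unfolding qform_def sesq_def by (simp add: algebra_simps sum.distrib)

lemma norm_sesq_le: "cmod (sesq A x y) \<le> (\<Sum>i\<in>UNIV. \<Sum>j\<in>UNIV. cmod (A $ i $ j)) * norm x * norm y"
proof -
  have "cmod (sesq A x y) \<le> (\<Sum>i\<in>UNIV. \<Sum>j\<in>UNIV. cmod (cnj (x $ i) * A $ i $ j * y $ j))"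
    unfolding sesq_def by (rule order_trans[OF norm_sum sum_mono[OF norm_sum]])
  also have "\<dots> \<le> (\<Sum>i\<in>UNIV. \<Sum>j\<in>UNIV. norm x * cmod (A $ i $ j) * norm y)"
    by (intro sum_mono)
      (simp add: norm_mult mult_mono Finite_Cartesian_Product.norm_nth_le mult_right_mono)
  also have "\<dots> = (\<Sum>i\<in>UNIV. \<Sum>j\<in>UNIV. cmod (A $ i $ j)) * norm x * norm y"
    by (simp add: sum_distrib_left sum_distrib_right mult_ac)
  finally show ?thesis .
qed

lemma Re_qform_add_ge:
  fixes A :: "('n::finite) cmat"
  defines "C \<equiv> \<Sum>i\<in>UNIV. \<Sum>j\<in>UNIV. cmod (A $ i $ j)"
  shows "Re (qform A (x + y)) \<ge> Re (qform A y) - C * (norm x)\<^sup>2 - 2 * C * norm x * norm y"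
proof -
  have "cmod (qform A x) \<le> C * norm x * norm x"
    using norm_sesq_le[of A x x] unfolding C_def sesq_def qform_def .
  then have "Re (qform A x) \<ge> - (C * (norm x)\<^sup>2)"
    using abs_Re_le_cmod[of "qform A x"] by (simp add: power2_eq_square)
  moreover have "cmod (sesq A x y) \<le> C * norm x * norm y" "cmod (sesq A y x) \<le> C * norm y * norm x"
    using norm_sesq_le unfolding C_def by auto
  then have "Re (sesq A x y + sesq A y x) \<ge> - (2 * C * norm x * norm y)"
    using abs_Re_le_cmod[of "sesq A x y"] abs_Re_le_cmod[of "sesq A y x"] by (simp add: mult_ac)
  ultimately show ?thesis by (simp add: qform_add_vec)
qed

lemma pd_imp_uniformly_pos:
  fixes X :: "('n::finite) cmat"
  assumes "pd X"
  shows "\<exists>\<mu>>0. \<forall>u. Re (qform X u) \<ge> \<mu> * (norm u)\<^sup>2"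
proof -
  let ?f = "\<lambda>u. Re (qform X u)"
  have cont: "continuous_on (sphere 0 1) ?f"
    unfolding qform_def by (intro continuous_intros)
  obtain i0 :: 'n where True by blast
  have "axis i0 (1::complex) \<in> sphere 0 1" by (simp add: norm_axis_1)
  then have ne: "sphere (0::(complex, 'n) vec) 1 \<noteq> {}" by blast
  obtain u0 where u0: "u0 \<in> sphere 0 1" and min: "\<And>u. u \<in> sphere 0 1 \<Longrightarrow> ?f u0 \<le> ?f u"
    using continuous_attains_inf[OF compact_sphere ne cont] by blast
  have "u0 \<noteq> 0" using u0 by auto
  then have pos: "?f u0 > 0" using assms unfolding pd_def by blast
  have "?f u \<ge> ?f u0 * (norm u)\<^sup>2" for u
  proof (cases "u = 0")
    case True then show ?thesis by (simp add: qform_def)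
  next
    case False
    let ?w = "(1 / norm u) *\<^sub>R u"
    have "u = norm u *\<^sub>R ?w" using False by simp
    moreover have "qform X (norm u *\<^sub>R ?w) = of_real ((norm u)\<^sup>2) * qform X ?w"
      by (rule qform_scaleR_vec)
    ultimately have "?f u = (norm u)\<^sup>2 * ?f ?w" by simp
    also have "\<dots> \<ge> (norm u)\<^sup>2 * ?f u0" using False min[of ?w] by (simp add: mult_left_mono)
    finally show ?thesis by (simp add: mult.commute)
  qed
  then show ?thesis using pos by blast
qed

section \<open>Eigenvalues of a positive semidefinite matrix of rank r\<close>

lemma rank_mult_le_right:
  fixes A B :: "'a::field^'n^'n"
  shows "rank (A ** B) \<le> rank B"
proof -
  have "rows (A ** B) \<subseteq> vec.span (rows B)"
  proof
    fix x assume "x \<in> rows (A ** B)"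
    then obtain i where x: "x = row i (A ** B)" unfolding rows_def by blast
    have "x = (\<Sum>k\<in>UNIV. A $ i $ k *s row k B)"
      by (simp add: x row_def matrix_matrix_mult_def vec_eq_iff sum_component)
    also have "\<dots> \<in> vec.span (rows B)"
      by (intro vec.span_sum vec.span_scale vec.span_base) (unfold rows_def, blast)
    finally show "x \<in> vec.span (rows B)" .
  qed
  then have "vec.dim (rows (A ** B)) \<le> vec.dim (vec.span (rows B))"
    by (rule vec.dim_subset)
  then show ?thesis by (simp add: row_rank_def_gen)
qed

lemma rank_mult_le_left:
  fixes A B :: "'a::field^'n^'n"
  shows "rank (A ** B) \<le> rank A"
proof -
  have "row i (A ** B) = transpose B *v row i A" for i
    by (simp add: row_def matrix_matrix_mult_def matrix_vector_mult_def transpose_def vec_eq_iff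
        mult.commute)
  then have "rows (A ** B) \<subseteq> (\<lambda>x. transpose B *v x) ` rows A"
    unfolding rows_def by blast
  then have "vec.dim (rows (A ** B)) \<le> vec.dim ((\<lambda>x. transpose B *v x) ` rows A)"
    by (rule vec.dim_subset)
  also have "\<dots> \<le> vec.dim (rows A)"
    by (rule vec.dim_image_le[OF matrix_vector_mul_linear_gen])
  finally show ?thesis by (simp add: row_rank_def_gen)
qed

lemma rank_diagonal:
  fixes l :: "'a::field^'n"
  shows "rank ((\<chi> i j. if i = j then l $ i else 0) :: 'a^'n^'n) = card {i. l $ i \<noteq> 0}"
proof -
  let ?D = "(\<chi> i j. if i = j then l $ i else 0) :: 'a^'n^'n"
  let ?B = "(\<lambda>i. axis i (1::'a)) ` {i. l $ i \<noteq> 0}"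
  have rowi: "row i ?D = l $ i *s axis i 1" for i
    by (simp add: row_def vec_eq_iff axis_def)
  have "rows ?D \<subseteq> vec.span ?B"
  proof
    fix x assume "x \<in> rows ?D"
    then obtain i where x: "x = l $ i *s axis i 1" unfolding rows_def by (auto simp: rowi)
    show "x \<in> vec.span ?B"
    proof (cases "l $ i = 0")
      case True then show ?thesis by (simp add: x vec.span_zero)
    next
      case False then show ?thesis unfolding x by (intro vec.span_scale vec.span_base) blast
    qed
  qed
  moreover have "?B \<subseteq> vec.span (rows ?D)"
  proof
    fix x assume "x \<in> ?B"
    then obtain i where i: "l $ i \<noteq> 0" and x: "x = axis i 1" by auto
    have "x = inverse (l $ i) *s row i ?D" using i by (simp add: x rowi)
    also have "\<dots> \<in> vec.span (rows ?D)"
      by (intro vec.span_scale vec.span_base) (unfold rows_def, blast)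
    finally show "x \<in> vec.span (rows ?D)" .
  qed
  ultimately have "vec.span (rows ?D) = vec.span ?B" by (simp add: vec.span_eq)
  then have "vec.dim (rows ?D) = vec.dim ?B"
    using vec.dim_span[of "rows ?D"] vec.dim_span[of ?B] by simp
  moreover have "vec.independent ?B"
    by (rule vec.independent_mono[OF vec.independent_Basis]) (unfold cart_basis_def, blast)
  moreover have "card ?B = card {i. l $ i \<noteq> 0}"
    by (rule card_image) (simp add: inj_on_def axis_eq_axis)
  ultimately show ?thesis by (simp add: row_rank_def_gen vec.dim_eq_card_independent)
qed

lemma rank_diagm: "rank (diagm l) = card {i. l $ i \<noteq> 0}"
proof -
  have "diagm l = (\<chi> i j. if i = j then (\<chi> i. complex_of_real (l $ i)) $ i else 0)"
    by (simp add: diagm_def vec_eq_iff)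
  then show ?thesis using rank_diagonal[of "\<chi> i. complex_of_real (l $ i)"] by simp
qed

lemma exists_bij_sorted_desc:
  fixes g :: "'n::{finite,linorder} \<Rightarrow> real"
  shows "\<exists>\<sigma>::'n\<Rightarrow>'n. bij \<sigma> \<and> (\<forall>i j. i \<le> j \<longrightarrow> g (\<sigma> j) \<le> g (\<sigma> i))"
proof -
  define xs where "xs = sorted_list_of_set (UNIV::'n set)"
  define ys where "ys = sort_key (\<lambda>i. - g i) xs"
  have dxs: "distinct xs" and sxs: "set xs = UNIV" and srt: "sorted_wrt (<) xs"
    unfolding xs_def by (simp_all add: strict_sorted_list_of_set)
  have dys: "distinct ys" and lys: "length ys = length xs"
    unfolding ys_def using dxs by (simp_all add: distinct_sort)
  have sk: "sorted (map (\<lambda>i. - g i) ys)" by (simp add: ys_def)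
  define idx where "idx i = (THE k. k < length xs \<and> xs ! k = i)" for i
  have idx: "idx i < length xs \<and> xs ! idx i = i" for i
  proof -
    have "\<exists>!k. k < length xs \<and> xs ! k = i" using distinct_Ex1[OF dxs, of i] sxs by auto
    then show ?thesis unfolding idx_def by (rule theI')
  qed
  define \<sigma> where "\<sigma> i = ys ! idx i" for i
  have "inj \<sigma>"
  proof (rule injI)
    fix a b assume "\<sigma> a = \<sigma> b"
    moreover have "idx a < length ys" "idx b < length ys" using idx[of a] idx[of b] lys by auto
    ultimately have "idx a = idx b" using nth_eq_iff_index_eq[OF dys] unfolding \<sigma>_def by blast
    then show "a = b" by (metis idx)
  qed
  then have "bij \<sigma>" by (simp add: bij_def finite_UNIV_inj_surj)
  moreover have "g (\<sigma> j) \<le> g (\<sigma> i)" if "i \<le> j" for i j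
  proof -
    have "idx i \<le> idx j"
    proof (rule ccontr)
      assume "\<not> idx i \<le> idx j"
      then have "xs ! idx j < xs ! idx i"
        using idx[of i] idx[of j] by (intro sorted_wrt_nth_less[OF srt]) auto
      then show False using that by (metis idx leD)
    qed
    then have "map (\<lambda>i. - g i) ys ! idx i \<le> map (\<lambda>i. - g i) ys ! idx j"
      using sk idx[of j] lys by (intro sorted_nth_mono) auto
    then show ?thesis using idx[of i] idx[of j] lys by (simp add: \<sigma>_def)
  qed
  ultimately show ?thesis by blast
qed

lemma udu_nth:
  "(P ** diagm l ** ctrans P) $ a $ b = (\<Sum>j\<in>UNIV. P $ a $ j * of_real (l $ j) * cnj (P $ b $ j))"
proof -
  have "(P ** diagm l ** ctrans P) $ a $ b
      = (\<Sum>k\<in>UNIV. (\<Sum>j\<in>UNIV. P $ a $ j * (if j = k then of_real (l $ j) else 0)) * cnj (P $ b $ k))"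
    by (simp add: matrix_matrix_mult_def diagm_def ctrans_def)
  then show ?thesis by (simp add: if_distrib if_distribR cong: if_cong)
qed

lemma exists_sorted_decomp:
  fixes P :: "('n::{finite,linorder}) cmat"
  assumes u: "unitary P" and X: "X = P ** diagm l ** ctrans P"
  shows "\<exists>l' P'. nonincr l' \<and> unitary P' \<and> X = P' ** diagm l' ** ctrans P'"
proof -
  obtain \<sigma> :: "'n \<Rightarrow> 'n" where b: "bij \<sigma>" and m: "\<And>i j. i \<le> j \<Longrightarrow> l $ (\<sigma> j) \<le> l $ (\<sigma> i)"
    using exists_bij_sorted_desc[of "\<lambda>i. l $ i"] by blast
  define l' where "l' = (\<chi> j. l $ (\<sigma> j))"
  define P' where "P' = (\<chi> a j. P $ a $ (\<sigma> j))"
  have "nonincr l'" unfolding nonincr_def l'_def using m by simp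
  moreover have "unitary P'"
  proof -
    have "(ctrans P' ** P') $ j $ k = (ctrans P ** P) $ (\<sigma> j) $ (\<sigma> k)" for j k
      by (simp add: matrix_matrix_mult_def ctrans_def P'_def)
    also have "(ctrans P ** P) $ (\<sigma> j) $ (\<sigma> k) = mat 1 $ j $ k" for j k
      using u bij_is_inj[OF b] unfolding unitary_def by (simp add: mat_def inj_eq)
    finally show ?thesis unfolding unitary_def by (simp add: vec_eq_iff)
  qed
  moreover have "(P' ** diagm l' ** ctrans P') $ a $ c = X $ a $ c" for a c
  proof -
    have "(P' ** diagm l' ** ctrans P') $ a $ c
        = (\<Sum>j\<in>UNIV. (\<lambda>j. P $ a $ j * of_real (l $ j) * cnj (P $ c $ j)) (\<sigma> j))"
      unfolding udu_nth by (simp add: P'_def l'_def)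
    also have "\<dots> = (\<Sum>j\<in>UNIV. P $ a $ j * of_real (l $ j) * cnj (P $ c $ j))"
      using sum.reindex_bij_betw[of \<sigma> UNIV UNIV] b by (simp add: bij_betw_def)
    finally show ?thesis unfolding X udu_nth .
  qed
  ultimately show ?thesis by (metis vec_eq_iff)
qed

lemma eigvals_nonincr:
  fixes P :: "('n::{finite,linorder}) cmat"
  assumes "unitary P" and "X = P ** diagm (eigvals X) ** ctrans P"
  shows "nonincr (eigvals X)"
proof -
  have "\<exists>l. nonincr l \<and> (\<exists>P. unitary P \<and> X = P ** diagm l ** ctrans P)"
    using exists_sorted_decomp[OF assms] by blast
  from someI_ex[OF this] show ?thesis unfolding eigvals_def by blast
qed

lemma unitary_congruence_decomp:
  assumes u: "unitary P" and X: "X = P ** diagm l ** ctrans P"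
  shows "ctrans P ** X ** P = diagm l"
proof -
  have "ctrans P ** X ** P = (ctrans P ** P) ** diagm l ** (ctrans P ** P)"
    by (simp add: X matrix_mul_assoc)
  then show ?thesis using u by (simp add: unitary_def)
qed

lemma psd_decomp_nonneg:
  assumes u: "unitary P" and X: "X = P ** diagm l ** ctrans P" and "psd X"
  shows "l $ i \<ge> 0"
proof -
  have "qform X (P *v axis i 1) = qform (diagm l) (axis i 1)"
    using unitary_congruence_decomp[OF u X] by (metis qform_congruence)
  also have "\<dots> = of_real (l $ i)"
    by (simp add: qform_diagm axis_def if_distrib if_distribR cong: if_cong)
  finally show ?thesis using \<open>psd X\<close> unfolding psd_def by (metis Re_complex_of_real)
qed

lemma rank_decomp:
  assumes u: "unitary P" and X: "X = P ** diagm l ** ctrans P"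
  shows "rank X = card {i. l $ i \<noteq> 0}"
proof -
  have "rank X = rank (P ** (diagm l ** ctrans P))" by (simp add: X matrix_mul_assoc)
  also have "\<dots> \<le> rank (diagm l)" by (rule order_trans[OF rank_mult_le_right rank_mult_le_left])
  finally have "rank X \<le> rank (diagm l)" .
  moreover have "rank (diagm l) = rank (ctrans P ** (X ** P))"
    using unitary_congruence_decomp[OF u X] by (simp add: matrix_mul_assoc)
  moreover have "\<dots> \<le> rank X" by (rule order_trans[OF rank_mult_le_right rank_mult_le_left])
  ultimately show ?thesis using rank_diagm[of l] by linarith
qed

lemma nonincr_nonzero_iff_pos_less:
  fixes l :: "(real, 'n::{finite,linorder}) vec"
  assumes ni: "nonincr l" and nn: "\<And>i. l $ i \<ge> 0" and c: "card {i. l $ i \<noteq> 0} = r"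
  shows "l $ i \<noteq> 0 \<longleftrightarrow> pos i < r"
proof -
  let ?S = "{i. l $ i \<noteq> 0}"
  have down: "j \<in> ?S" if "k \<in> ?S" "j \<le> k" for j k
    using ni nn[of k] that unfolding nonincr_def by force
  show ?thesis
  proof
    assume "l $ i \<noteq> 0"
    then have "insert i {k. k < i} \<subseteq> ?S" using down by auto
    then have "card (insert i {k. k < i}) \<le> r" using c by (metis card_mono finite)
    then show "pos i < r" unfolding pos_def by simp
  next
    assume "pos i < r"
    show "l $ i \<noteq> 0"
    proof
      assume "l $ i = 0"
      then have "?S \<subseteq> {k. k < i}" using down by (auto simp: not_less[symmetric])
      then have "card ?S \<le> card {k. k < i}" by (intro card_mono) auto
      then show False using c \<open>pos i < r\<close> unfolding pos_def by simp
    qed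
  qed
qed

lemma eigvals_rank_split:
  fixes Xbar Pbar :: "('n::{finite,linorder}) cmat"
  assumes "psd Xbar" and "rank Xbar = r" and "r \<ge> 1"
    and u: "unitary Pbar" and X: "Xbar = Pbar ** diagm (eigvals Xbar) ** ctrans Pbar"
  shows "\<forall>i. r \<le> pos i \<longrightarrow> eigvals Xbar $ i = 0"
    and "\<exists>lm>0. \<forall>i. pos i < r \<longrightarrow> eigvals Xbar $ i \<ge> lm"
proof -
  let ?l = "eigvals Xbar"
  let ?A = "{i. ?l $ i \<noteq> 0}"
  have nn: "\<And>i. ?l $ i \<ge> 0" using psd_decomp_nonneg[OF u X \<open>psd Xbar\<close>] by blast
  have c: "card ?A = r" using rank_decomp[OF u X] \<open>rank Xbar = r\<close> by simp
  note split = nonincr_nonzero_iff_pos_less[OF eigvals_nonincr[OF u X] nn c]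
  show "\<forall>i. r \<le> pos i \<longrightarrow> ?l $ i = 0" using split by (auto simp: not_less[symmetric])
  have "?A \<noteq> {}"
  proof
    assume "?A = {}"
    then show False using c \<open>r \<ge> 1\<close> by simp
  qed
  define lm where "lm = Min ((\<lambda>i. ?l $ i) ` ?A)"
  have "lm \<in> (\<lambda>i. ?l $ i) ` ?A" unfolding lm_def using \<open>?A \<noteq> {}\<close> by (intro Min_in) auto
  then have "lm > 0" using nn by (auto simp: less_le)
  moreover have "?l $ i \<ge> lm" if "pos i < r" for i
    using split[of i] that unfolding lm_def by (intro Min_le) auto
  ultimately show "\<exists>lm>0. \<forall>i. pos i < r \<longrightarrow> ?l $ i \<ge> lm" by blast
qed

section \<open>Perturbations of a positive semidefinite matrix\<close>

text \<open>\<open>tail_proj r v\<close> keeps the coordinates of position at least \<open>r\<close>, so \<open>P *v tail_proj r v\<close>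
  ranges over the column space of \<open>P\<^sub>2\<close>.\<close>

definition tail_proj :: "nat \<Rightarrow> (complex, 'n::{finite,linorder}) vec \<Rightarrow> (complex, 'n) vec" where
  "tail_proj r v = (\<chi> i. if r \<le> pos i then v $ i else 0)"

lemma herm_lower_block: "herm D \<Longrightarrow> herm (lower_block r P D)"
proof -
  assume "herm D"
  then have e: "ctrans (ctrans P ** D ** P) = ctrans P ** D ** P"
    by (simp add: ctrans_mult herm_def matrix_mul_assoc)
  have "cnj ((ctrans P ** D ** P) $ j $ i) = (ctrans P ** D ** P) $ i $ j" for i j
    using arg_cong[OF e, of "\<lambda>M. M $ i $ j"] by (simp add: ctrans_def)
  then show ?thesis unfolding herm_def lower_block_def ctrans_def by (simp add: vec_eq_iff)
qed

lemma qform_lower_block: "qform (lower_block r P D) v = qform D (P *v tail_proj r v)"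
proof -
  have "qform (lower_block r P D) v = qform (ctrans P ** D ** P) (tail_proj r v)"
    unfolding qform_def lower_block_def tail_proj_def by (intro sum.cong refl) auto
  then show ?thesis by (simp add: qform_congruence)
qed

lemma psd_lower_block_iff:
  "herm D \<Longrightarrow> psd (lower_block r P D) \<longleftrightarrow> (\<forall>v. Re (qform D (P *v tail_proj r v)) \<ge> 0)"
  unfolding psd_def by (simp add: herm_lower_block qform_lower_block)

lemma qform_tail_decomp_zero:
  assumes u: "unitary P" and X: "X = P ** diagm l ** ctrans P"
    and z: "\<And>i. r \<le> pos i \<Longrightarrow> l $ i = 0"
  shows "qform X (P *v tail_proj r v) = 0"
proof -
  have "qform X (P *v tail_proj r v) = qform (diagm l) (tail_proj r v)"
    using unitary_congruence_decomp[OF u X] by (metis qform_congruence)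
  also have "\<dots> = 0" unfolding qform_diagm tail_proj_def using z by (simp add: sum.neutral)
  finally show ?thesis .
qed

text \<open>Feasible directions at \<open>X\<close> lie in the cone \<open>{D. P\<^sub>2\<^sup>T D P\<^sub>2 \<succeq> 0}\<close>, because \<open>X\<close> vanishes on
  the column space of \<open>P\<^sub>2\<close>.\<close>

lemma psd_lower_block_of_psd_add:
  assumes u: "unitary P" and X: "X = P ** diagm l ** ctrans P"
    and z: "\<And>i. r \<le> pos i \<Longrightarrow> l $ i = 0"
    and h: "herm D" and t: "t > 0" and p: "psd (X + t *\<^sub>R D)"
  shows "psd (lower_block r P D)"
  unfolding psd_lower_block_iff[OF h]
proof
  fix v
  have "0 \<le> Re (qform (X + t *\<^sub>R D) (P *v tail_proj r v))" using p unfolding psd_def by blast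
  also have "\<dots> = t * Re (qform D (P *v tail_proj r v))"
    by (simp add: qform_add qform_scaleR qform_tail_decomp_zero[OF u X z])
  finally show "Re (qform D (P *v tail_proj r v)) \<ge> 0" using t by (simp add: zero_le_mult_iff)
qed

lemma binary_quadratic_nonneg:
  fixes al t ka C C' a b :: real
  assumes "al > 0" "t \<ge> 0" "ka > 0" "C \<le> C'" "t * C' \<le> al / 2" "t * C'\<^sup>2 \<le> ka * al / 2"
    "a \<ge> 0" "b \<ge> 0"
  shows "al * a\<^sup>2 - t * C * a\<^sup>2 - 2 * t * C * a * b + t * ka * b\<^sup>2 \<ge> 0"
proof -
  define s where "s = t * C'"
  have s2: "s\<^sup>2 \<le> al * t * ka / 2"
  proof -
    have "s\<^sup>2 = t * (t * C'\<^sup>2)" by (simp add: s_def power2_eq_square)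
    also have "\<dots> \<le> t * (ka * al / 2)" using assms by (intro mult_left_mono) auto
    finally show ?thesis by (simp add: mult_ac)
  qed
  have "(al/2) * ((al/2)*a\<^sup>2 - 2 * s * a * b + t*ka*b\<^sup>2) = (al*a/2 - s * b)\<^sup>2 + (al*t*ka/2 - s\<^sup>2)*b\<^sup>2"
    by (simp add: algebra_simps power2_eq_square)
  also have "\<dots> \<ge> 0" using s2 by (intro add_nonneg_nonneg) auto
  finally have q: "0 \<le> (al/2)*a\<^sup>2 - 2 * s * a * b + t*ka*b\<^sup>2"
    using \<open>al > 0\<close> by (simp add: zero_le_mult_iff)
  have tc: "t * C \<le> s" unfolding s_def using assms by (intro mult_left_mono) auto
  have "t * C * a\<^sup>2 \<le> s * a\<^sup>2" using tc by (intro mult_right_mono) auto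
  moreover have "(t * C) * (2 * a * b) \<le> s * (2 * a * b)" using tc assms by (intro mult_right_mono) auto
  moreover have "s * a\<^sup>2 \<le> (al/2) * a\<^sup>2" unfolding s_def using assms by (intro mult_right_mono) auto
  ultimately show ?thesis using q by (simp add: mult_ac)
qed

lemma Re_qform_diagm_ge_head:
  assumes lpos: "\<And>i. pos i < r \<Longrightarrow> l $ i \<ge> lm" and z: "\<And>i. r \<le> pos i \<Longrightarrow> l $ i = 0"
  shows "Re (qform (diagm l) v) \<ge> lm * (norm (v - tail_proj r v))\<^sup>2"
proof -
  have "lm * (norm (v - tail_proj r v))\<^sup>2 = (\<Sum>i\<in>UNIV. lm * (cmod ((v - tail_proj r v) $ i))\<^sup>2)"
    by (simp add: norm_sq_vec sum_distrib_left)
  also have "\<dots> \<le> (\<Sum>i\<in>UNIV. l $ i * (cmod (v $ i))\<^sup>2)"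
  proof (intro sum_mono)
    fix i
    show "lm * (cmod ((v - tail_proj r v) $ i))\<^sup>2 \<le> l $ i * (cmod (v $ i))\<^sup>2"
      using lpos[of i] by (cases "r \<le> pos i") (simp_all add: tail_proj_def z mult_right_mono)
  qed
  finally show ?thesis by (simp add: qform_diagm)
qed

text \<open>Conversely, a direction that is uniformly positive on the column space of \<open>P\<^sub>2\<close> stays
  feasible for a short time: on the column space of \<open>P\<^sub>1\<close> the eigenvalues of \<open>X\<close> dominate, and
  the cross terms are absorbed by completing the square.\<close>

lemma psd_add_small_multiple:
  fixes P :: "('n::{finite,linorder}) cmat"
  assumes u: "unitary P" and X: "X = P ** diagm l ** ctrans P"
    and lm: "lm > 0" and lpos: "\<And>i. pos i < r \<Longrightarrow> l $ i \<ge> lm"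
    and z: "\<And>i. r \<le> pos i \<Longrightarrow> l $ i = 0"
    and h: "herm X" "herm H" and k: "\<kappa> > 0"
    and hyp: "\<And>v. Re (qform H (P *v tail_proj r v)) \<ge> \<kappa> * (norm (tail_proj r v))\<^sup>2"
  shows "\<exists>t0>0. \<forall>t. 0 \<le> t \<and> t \<le> t0 \<longrightarrow> psd (X + t *\<^sub>R H)"
proof -
  define A where "A = ctrans P ** H ** P"
  define C where "C = (\<Sum>i\<in>UNIV. \<Sum>j\<in>UNIV. cmod (A $ i $ j))"
  define C' where "C' = C + 1"
  have C0: "C \<ge> 0" unfolding C_def by (intro sum_nonneg) auto
  have C'0: "C' > 0" using C0 by (simp add: C'_def)
  define t0 where "t0 = min (lm / (2 * C')) (\<kappa> * lm / (2 * C'\<^sup>2))"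
  have "psd (X + t *\<^sub>R H)" if t: "0 \<le> t" "t \<le> t0" for t
    unfolding psd_def
  proof (intro conjI allI)
    show "herm (X + t *\<^sub>R H)" using h by (simp add: herm_add herm_scaleR)
  next
    fix w
    define zz where "zz = ctrans P *v w"
    have wz: "w = P *v zz" unfolding zz_def using unitary_right[OF u]
      by (simp add: matrix_vector_mul_assoc)
    define y where "y = tail_proj r zz"
    define x where "x = zz - y"
    have q1: "qform (X + t *\<^sub>R H) w = qform (diagm l) zz + of_real t * qform A zz"
    proof -
      have "qform (X + t *\<^sub>R H) w = qform X (P *v zz) + of_real t * qform H (P *v zz)"
        unfolding wz by (simp add: qform_add qform_scaleR)
      then show ?thesis
        unfolding A_def qform_congruence[symmetric] unitary_congruence_decomp[OF u X] .
    qed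
    have d1: "Re (qform (diagm l) zz) \<ge> lm * (norm x)\<^sup>2"
      unfolding x_def y_def using lpos z by (rule Re_qform_diagm_ge_head)
    have "Re (qform A y) \<ge> \<kappa> * (norm y)\<^sup>2"
      using hyp[of zz] unfolding A_def y_def by (simp add: qform_congruence)
    moreover have "zz = x + y" by (simp add: x_def)
    ultimately have "Re (qform A zz) \<ge> \<kappa> * (norm y)\<^sup>2 - C * (norm x)\<^sup>2 - 2 * C * norm x * norm y"
      using Re_qform_add_ge[where A = A and x = x and y = y] unfolding C_def by simp
    then have "t * Re (qform A zz) \<ge> t * (\<kappa> * (norm y)\<^sup>2 - C * (norm x)\<^sup>2 - 2 * C * norm x * norm y)"
      using t by (intro mult_left_mono) auto
    moreover have "lm * (norm x)\<^sup>2 - t * C * (norm x)\<^sup>2 - 2 * t * C * norm x * norm y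
        + t * \<kappa> * (norm y)\<^sup>2 \<ge> 0"
    proof (rule binary_quadratic_nonneg[OF lm t(1) k, of C C'])
      show "C \<le> C'" by (simp add: C'_def)
      show "t * C' \<le> lm / 2" "t * C'\<^sup>2 \<le> \<kappa> * lm / 2"
        using t C'0 unfolding t0_def by (simp_all add: field_simps)
    qed auto
    ultimately show "Re (qform (X + t *\<^sub>R H) w) \<ge> 0" using d1 unfolding q1
      by (simp add: algebra_simps)
  qed
  moreover have "t0 > 0" unfolding t0_def using lm k C'0 by simp
  ultimately show ?thesis by blast
qed

section \<open>The limit problem\<close>

definition qbeta_form :: "(nat \<Rightarrow> 'v::real_inner) \<Rightarrow> nat set \<Rightarrow> (nat \<Rightarrow> real) \<Rightarrow> 'v \<Rightarrow> real" where
  "qbeta_form \<Theta> \<beta> p D = (\<Sum>k\<in>\<beta>. p k * (\<Theta> k \<bullet> D)\<^sup>2)"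

definition limit_fun ::
    "(nat \<Rightarrow> 'v::real_inner) \<Rightarrow> nat set \<Rightarrow> (nat \<Rightarrow> real) \<Rightarrow> 'v \<Rightarrow> 'v \<Rightarrow> real" where
  "limit_fun \<Theta> \<beta> p G D = 1/2 * qbeta_form \<Theta> \<beta> p D + G \<bullet> D"

lemma limit_obj_eq_limit_fun:
  "limit_obj \<Theta> \<beta> p f Xbar = limit_fun \<Theta> \<beta> p (mat 1 - spectral_op f Xbar)"
  unfolding limit_obj_def limit_fun_def qbeta_form_def Qbeta_def minner_inner
  by (simp add: inner_sum_left power2_eq_square mult.assoc fun_eq_iff)

lemma limit_fun_add_scaleR:
  "limit_fun \<Theta> \<beta> p G (A + t *\<^sub>R E) = limit_fun \<Theta> \<beta> p G A
     + t * ((\<Sum>k\<in>\<beta>. p k * (\<Theta> k \<bullet> A) * (\<Theta> k \<bullet> E)) + G \<bullet> E) + t\<^sup>2 / 2 * qbeta_form \<Theta> \<beta> p E"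
  unfolding limit_fun_def qbeta_form_def
  by (simp add: inner_add_right power2_eq_square algebra_simps sum.distrib sum_distrib_left
      sum_divide_distrib)

lemma continuous_on_limit_fun: "continuous_on S (limit_fun \<Theta> \<beta> p G)"
  unfolding limit_fun_def qbeta_form_def by (intro continuous_intros)

lemma orthonormal_expansion:
  fixes \<Theta> :: "nat \<Rightarrow> ('n::finite) cmat"
  assumes orth: "\<forall>k\<in>{1..d}. \<forall>l\<in>{1..d}. minner (\<Theta> k) (\<Theta> l) = (if k = l then 1 else 0)"
    and span: "\<forall>X\<in>Sn b. \<exists>c. X = (\<Sum>k=1..d. c k *\<^sub>R \<Theta> k)"
    and D: "D \<in> Sn b"
  shows "D = (\<Sum>k=1..d. (\<Theta> k \<bullet> D) *\<^sub>R \<Theta> k)"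
proof -
  obtain c where c: "D = (\<Sum>k=1..d. c k *\<^sub>R \<Theta> k)" using span D by blast
  have "\<Theta> j \<bullet> D = c j" if j: "j \<in> {1..d}" for j
  proof -
    have "\<Theta> j \<bullet> D = (\<Sum>k=1..d. c k * (\<Theta> j \<bullet> \<Theta> k))" unfolding c by (simp add: inner_sum_right)
    also have "\<dots> = (\<Sum>k=1..d. if k = j then c k else 0)"
      using orth j by (intro sum.cong refl) (auto simp: minner_inner)
    finally show ?thesis using j by simp
  qed
  then show ?thesis using c by (metis (no_types, lifting) sum.cong)
qed

lemma norm_sq_eq_sum_coords:
  fixes \<Theta> :: "nat \<Rightarrow> ('n::finite) cmat"
  assumes orth: "\<forall>k\<in>{1..d}. \<forall>l\<in>{1..d}. minner (\<Theta> k) (\<Theta> l) = (if k = l then 1 else 0)"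
    and span: "\<forall>X\<in>Sn b. \<exists>c. X = (\<Sum>k=1..d. c k *\<^sub>R \<Theta> k)"
    and D: "D \<in> Sn b" and al: "\<forall>k\<in>\<alpha>. \<Theta> k \<bullet> D = 0"
  shows "(norm D)\<^sup>2 = (\<Sum>k\<in>{1..d} - \<alpha>. (\<Theta> k \<bullet> D)\<^sup>2)"
proof -
  have "(norm D)\<^sup>2 = (\<Sum>k=1..d. (\<Theta> k \<bullet> D) *\<^sub>R \<Theta> k) \<bullet> D"
    using orthonormal_expansion[OF orth span D] by (simp add: power2_norm_eq_inner)
  also have "\<dots> = (\<Sum>k=1..d. (\<Theta> k \<bullet> D)\<^sup>2)" by (simp add: inner_sum_left power2_eq_square)
  also have "\<dots> = (\<Sum>k\<in>{1..d} - \<alpha>. (\<Theta> k \<bullet> D)\<^sup>2)"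
    by (rule sum.mono_neutral_right) (use al in auto)
  finally show ?thesis .
qed

lemma abs_coord_le_norm:
  fixes \<Theta> :: "nat \<Rightarrow> ('n::finite) cmat"
  assumes "\<forall>k\<in>{1..d}. \<forall>l\<in>{1..d}. minner (\<Theta> k) (\<Theta> l) = (if k = l then 1 else 0)"
    and "k \<in> {1..d}"
  shows "\<bar>\<Theta> k \<bullet> D\<bar> \<le> norm D"
proof -
  have "norm (\<Theta> k) = 1" using assms by (simp add: minner_inner norm_eq_sqrt_inner)
  then show ?thesis using Cauchy_Schwarz_ineq2[of "\<Theta> k" D] by simp
qed

lemma qbeta_form_coercive:
  fixes \<Theta> :: "nat \<Rightarrow> ('n::finite) cmat"
  assumes orth: "\<forall>k\<in>{1..d}. \<forall>l\<in>{1..d}. minner (\<Theta> k) (\<Theta> l) = (if k = l then 1 else 0)"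
    and span: "\<forall>X\<in>Sn b. \<exists>c. X = (\<Sum>k=1..d. c k *\<^sub>R \<Theta> k)"
    and D: "D \<in> Sn b" and al: "\<forall>k\<in>\<alpha>. \<Theta> k \<bullet> D = 0"
    and pm: "\<forall>k\<in>{1..d} - \<alpha>. pm \<le> p k" "pm \<ge> 0"
  shows "qbeta_form \<Theta> ({1..d} - \<alpha>) p D \<ge> pm * (norm D)\<^sup>2"
  unfolding qbeta_form_def norm_sq_eq_sum_coords[OF orth span D al] sum_distrib_left
  using pm by (intro sum_mono mult_right_mono) auto

lemma nonneg_of_small_perturbations:
  fixes a b :: real
  assumes "\<And>t. 0 < t \<Longrightarrow> t \<le> 1 \<Longrightarrow> t * a + t\<^sup>2 / 2 * b \<ge> 0" and "b \<ge> 0"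
  shows "a \<ge> 0"
proof (rule ccontr)
  assume "\<not> a \<ge> 0"
  then have a: "a < 0" by simp
  define t where "t = min 1 (- a / (b + 1))"
  have "- a / (b + 1) > 0" using a assms(2) by (intro divide_pos_pos) auto
  then have t0: "0 < t" "t \<le> 1" by (auto simp: t_def)
  have "t * (b + 1) \<le> (- a / (b + 1)) * (b + 1)"
    using assms(2) by (intro mult_right_mono) (auto simp: t_def)
  also have "\<dots> = - a" using assms(2) by simp
  finally have tb: "t * b \<le> - a" using t0 by (simp add: algebra_simps)
  have "t * a + t\<^sup>2 / 2 * b = t * (a + t * b / 2)" by (simp add: power2_eq_square algebra_simps)
  also have "\<dots> < 0" using t0 tb a by (intro mult_pos_neg) auto
  finally show False using assms(1)[OF t0] by simp
qed

lemma limit_fun_min_growth: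
  assumes "convex K" and Dh: "Dh \<in> K"
    and opt: "\<forall>D\<in>K. limit_fun \<Theta> \<beta> p G Dh \<le> limit_fun \<Theta> \<beta> p G D"
    and D: "D \<in> K" and pnn: "\<forall>k\<in>\<beta>. p k \<ge> 0"
  shows "limit_fun \<Theta> \<beta> p G D \<ge> limit_fun \<Theta> \<beta> p G Dh + 1/2 * qbeta_form \<Theta> \<beta> p (D - Dh)"
proof -
  let ?E = "D - Dh"
  let ?a = "(\<Sum>k\<in>\<beta>. p k * (\<Theta> k \<bullet> Dh) * (\<Theta> k \<bullet> ?E)) + G \<bullet> ?E"
  have "t * ?a + t\<^sup>2 / 2 * qbeta_form \<Theta> \<beta> p ?E \<ge> 0" if t: "0 < t" "t \<le> 1" for t
  proof -
    have "Dh + t *\<^sub>R ?E = (1 - t) *\<^sub>R Dh + t *\<^sub>R D" by (simp add: algebra_simps)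
    also have "\<dots> \<in> K" using \<open>convex K\<close> Dh D t by (intro convexD) auto
    finally have "limit_fun \<Theta> \<beta> p G Dh \<le> limit_fun \<Theta> \<beta> p G (Dh + t *\<^sub>R ?E)" using opt by blast
    then show ?thesis unfolding limit_fun_add_scaleR by simp
  qed
  moreover have "qbeta_form \<Theta> \<beta> p ?E \<ge> 0"
    unfolding qbeta_form_def using pnn by (intro sum_nonneg) auto
  ultimately have "?a \<ge> 0" by (rule nonneg_of_small_perturbations)
  then show ?thesis using limit_fun_add_scaleR[of \<Theta> \<beta> p G Dh 1 ?E] by simp
qed

lemma limit_fun_has_min:
  fixes K :: "'v::euclidean_space set"
  assumes "closed K" and z: "0 \<in> K" and c: "c > 0"
    and coer: "\<forall>D\<in>K. qbeta_form \<Theta> \<beta> p D \<ge> c * (norm D)\<^sup>2"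
  shows "\<exists>Dh\<in>K. \<forall>D\<in>K. limit_fun \<Theta> \<beta> p G Dh \<le> limit_fun \<Theta> \<beta> p G D"
proof -
  let ?f = "limit_fun \<Theta> \<beta> p G"
  define R where "R = 2 * norm G / c + 1"
  have R: "R > 0" using c by (simp add: R_def add_nonneg_pos)
  let ?K' = "K \<inter> cball 0 R"
  have cpt: "compact ?K'" using \<open>closed K\<close> by (intro closed_Int_compact compact_cball)
  have ne: "?K' \<noteq> {}" using z R by auto
  obtain Dh where Dh: "Dh \<in> ?K'" and m: "\<And>D. D \<in> ?K' \<Longrightarrow> ?f Dh \<le> ?f D"
    using continuous_attains_inf[OF cpt ne continuous_on_limit_fun] by blast
  have "?f Dh \<le> ?f D" if D: "D \<in> K" for D
  proof (cases "D \<in> cball 0 R")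
    case True then show ?thesis using m D by blast
  next
    case False
    then have nD: "norm D > R" by simp
    have "G \<bullet> D \<ge> - (norm G * norm D)" using Cauchy_Schwarz_ineq2[of G D] by linarith
    moreover have "qbeta_form \<Theta> \<beta> p D \<ge> c * (norm D)\<^sup>2" using coer D by blast
    ultimately have "?f D \<ge> c/2 * (norm D)\<^sup>2 - norm G * norm D" unfolding limit_fun_def by simp
    moreover have "2 * norm G / c < norm D" using nD by (simp add: R_def)
    then have "c / 2 * norm D - norm G > 0" using c by (simp add: divide_less_eq mult.commute)
    then have "norm D * (c / 2 * norm D - norm G) > 0" using nD R by (intro mult_pos_pos) auto
    then have "c/2 * (norm D)\<^sup>2 - norm G * norm D > 0" by (simp add: power2_eq_square algebra_simps)
    moreover have "?f Dh \<le> 0" using m[of 0] z R by (simp add: limit_fun_def qbeta_form_def)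
    ultimately show ?thesis by linarith
  qed
  then show ?thesis using Dh by blast
qed

lemma strong_min_unique:
  fixes \<phi> :: "'v::real_normed_vector \<Rightarrow> real"
  assumes "c > 0" and "\<forall>D\<in>K. \<phi> D \<ge> \<phi> Dh + c * (norm (D - Dh))\<^sup>2"
    and "D \<in> K" and "\<phi> D \<le> \<phi> Dh"
  shows "D = Dh"
proof -
  have "c * (norm (D - Dh))\<^sup>2 \<le> 0" using assms(2-4) by force
  then show ?thesis using \<open>c > 0\<close> by (simp add: mult_le_0_iff)
qed

section \<open>The rescaled estimation objective\<close>

text \<open>\<open>scaled_obj\<close> is the estimation objective at \<open>Xb + \<rho> D\<close>, minus its value at \<open>Xb\<close>, divided by
  \<open>\<rho>\<^sup>2\<close>; \<open>Gt\<close> stands for \<open>I - F(Xt)\<close>.\<close>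

definition scaled_obj :: "(nat \<Rightarrow> ('n::{finite,linorder}) cmat) \<Rightarrow> nat \<Rightarrow> (nat \<Rightarrow> nat)
    \<Rightarrow> (nat \<Rightarrow> real) \<Rightarrow> real \<Rightarrow> real \<Rightarrow> real \<Rightarrow> 'n cmat \<Rightarrow> 'n cmat \<Rightarrow> 'n cmat \<Rightarrow> 'n cmat \<Rightarrow> real" where
  "scaled_obj \<Theta> m om xi \<nu> \<rho> \<gamma> Gt Xb Xt D =
     1 / (2 * real m) * (\<Sum>i<m. (\<Theta> (om i) \<bullet> D)\<^sup>2)
     - \<nu> / (real m * \<rho>) * (\<Sum>i<m. xi i * (\<Theta> (om i) \<bullet> D))
     + Gt \<bullet> D + \<gamma> * ((Xb - Xt) \<bullet> D) + \<rho> * \<gamma> / 2 * (norm D)\<^sup>2"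

lemma est_obj_shift:
  assumes r: "\<rho> \<noteq> 0"
  shows "est_obj \<Theta> f m (\<lambda>i. minner (\<Theta> (om i)) Xb + \<nu> * xi i) om \<rho> \<gamma> Xt (Xb + \<rho> *\<^sub>R D)
       = est_obj \<Theta> f m (\<lambda>i. minner (\<Theta> (om i)) Xb + \<nu> * xi i) om \<rho> \<gamma> Xt Xb
         + \<rho>\<^sup>2 * scaled_obj \<Theta> m om xi \<nu> \<rho> \<gamma> (mat 1 - spectral_op f Xt) Xb Xt D"
proof -
  let ?G = "mat 1 - spectral_op f Xt"
  have "(\<Theta> (om i) \<bullet> Xb + \<nu> * xi i - \<Theta> (om i) \<bullet> (Xb + \<rho> *\<^sub>R D))\<^sup>2
     = (\<nu> * xi i)\<^sup>2 - 2 * \<rho> * \<nu> * (xi i * (\<Theta> (om i) \<bullet> D)) + \<rho>\<^sup>2 * (\<Theta> (om i) \<bullet> D)\<^sup>2" for i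
    by (simp add: inner_add_right power2_eq_square algebra_simps)
  then have s1: "(\<Sum>i<m. (\<Theta> (om i) \<bullet> Xb + \<nu> * xi i - \<Theta> (om i) \<bullet> (Xb + \<rho> *\<^sub>R D))\<^sup>2)
      = (\<Sum>i<m. (\<nu> * xi i)\<^sup>2) - 2 * \<rho> * \<nu> * (\<Sum>i<m. xi i * (\<Theta> (om i) \<bullet> D))
        + \<rho>\<^sup>2 * (\<Sum>i<m. (\<Theta> (om i) \<bullet> D)\<^sup>2)"
    by (simp add: sum.distrib sum_subtractf sum_distrib_left)
  have n1: "(norm (Xb + \<rho> *\<^sub>R D - Xt))\<^sup>2
      = (norm (Xb - Xt))\<^sup>2 + 2 * \<rho> * ((Xb - Xt) \<bullet> D) + \<rho>\<^sup>2 * (norm D)\<^sup>2"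
  proof -
    have "Xb + \<rho> *\<^sub>R D - Xt = (Xb - Xt) + \<rho> *\<^sub>R D" by simp
    then show ?thesis
      by (simp only: power2_norm_eq_inner)
        (simp add: inner_add_left inner_add_right power2_eq_square algebra_simps inner_commute)
  qed
  have lin: "?G \<bullet> (Xb + \<rho> *\<^sub>R D) = ?G \<bullet> Xb + \<rho> * (?G \<bullet> D)" by (simp add: inner_add_right)
  show ?thesis
  proof (cases "m = 0")
    case True
    then show ?thesis unfolding est_obj_def minner_inner scaled_obj_def n1 lin
      by (simp add: algebra_simps power2_eq_square)
  next
    case False
    then show ?thesis unfolding est_obj_def minner_inner scaled_obj_def s1 n1 lin
      using r by (simp add: field_simps power2_eq_square)
  qed
qed

definition label_count :: "(nat \<Rightarrow> nat) \<Rightarrow> nat \<Rightarrow> nat \<Rightarrow> real" where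
  "label_count om m k = (\<Sum>i<m. if om i = k then 1 else 0)"

definition label_noise :: "(nat \<Rightarrow> nat) \<Rightarrow> (nat \<Rightarrow> real) \<Rightarrow> nat \<Rightarrow> nat \<Rightarrow> real" where
  "label_noise om xi m k = (\<Sum>i<m. if om i = k then xi i else 0)"

lemma sum_regroup_labels:
  assumes "\<forall>i<m. om i \<in> \<beta>" and "finite \<beta>"
  shows "(\<Sum>i<m. x i * g (om i)) = (\<Sum>k\<in>\<beta>. g k * (\<Sum>i<m. if om i = k then x i else 0 :: real))"
proof -
  have "(\<Sum>i<m. x i * g (om i)) = (\<Sum>i<m. \<Sum>k\<in>\<beta>. if om i = k then x i * g k else 0)"
    using assms by (intro sum.cong refl) (simp add: sum.delta')
  also have "\<dots> = (\<Sum>k\<in>\<beta>. \<Sum>i<m. if om i = k then x i * g k else 0)" by (rule sum.swap)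
  finally show ?thesis by (simp add: sum_distrib_left if_distrib mult.commute cong: if_cong)
qed

lemma abs_sum_mult_le:
  fixes c a :: "nat \<Rightarrow> real"
  assumes "\<forall>k\<in>\<beta>. \<bar>c k\<bar> \<le> N"
  shows "\<bar>\<Sum>k\<in>\<beta>. a k * c k\<bar> \<le> (\<Sum>k\<in>\<beta>. \<bar>a k\<bar>) * N"
proof -
  have "\<bar>\<Sum>k\<in>\<beta>. a k * c k\<bar> \<le> (\<Sum>k\<in>\<beta>. \<bar>a k * c k\<bar>)" by (rule sum_abs)
  also have "\<dots> \<le> (\<Sum>k\<in>\<beta>. \<bar>a k\<bar> * N)"
    using assms by (intro sum_mono) (simp add: abs_mult mult_left_mono)
  finally show ?thesis by (simp add: sum_distrib_right)
qed

lemma scaled_obj_deviation: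
  fixes \<Theta> :: "nat \<Rightarrow> ('n::{finite,linorder}) cmat"
  assumes om: "\<forall>i<m. om i \<in> \<beta>" and fin: "finite \<beta>" and bsub: "\<beta> \<subseteq> {1..d}"
    and orth: "\<forall>k\<in>{1..d}. \<forall>l\<in>{1..d}. minner (\<Theta> k) (\<Theta> l) = (if k = l then 1 else 0)"
    and r: "\<rho> > 0" and g: "\<gamma> \<ge> 0" and nu: "\<nu> \<ge> 0"
  shows "\<bar>scaled_obj \<Theta> m om xi \<nu> \<rho> \<gamma> Gt Xb Xt D - limit_fun \<Theta> \<beta> p G D\<bar>
     \<le> (1/2 * (\<Sum>k\<in>\<beta>. \<bar>label_count om m k / real m - p k\<bar>) + \<rho> * \<gamma> / 2) * (norm D)\<^sup>2
       + (\<nu> * (\<Sum>k\<in>\<beta>. \<bar>label_noise om xi m k / (real m * \<rho>)\<bar>) + norm (Gt - G)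
          + \<gamma> * norm (Xb - Xt)) * norm D"
proof -
  let ?c = "\<lambda>k. \<Theta> k \<bullet> D"
  have cb: "\<forall>k\<in>\<beta>. \<bar>?c k\<bar> \<le> norm D" using bsub abs_coord_le_norm[OF orth] by blast
  have cb2: "\<forall>k\<in>\<beta>. \<bar>(?c k)\<^sup>2\<bar> \<le> (norm D)\<^sup>2"
    using cb power_mono[of "\<bar>_\<bar>" "norm D" 2] by (metis abs_ge_zero abs_power2 power2_abs)
  have e1: "(\<Sum>i<m. (\<Theta> (om i) \<bullet> D)\<^sup>2) = (\<Sum>k\<in>\<beta>. label_count om m k * (?c k)\<^sup>2)"
    using sum_regroup_labels[OF om fin, of "\<lambda>i. 1" "\<lambda>k. (?c k)\<^sup>2"]
    unfolding label_count_def by (simp add: mult.commute)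
  have e2: "(\<Sum>i<m. xi i * (\<Theta> (om i) \<bullet> D)) = (\<Sum>k\<in>\<beta>. label_noise om xi m k * ?c k)"
    using sum_regroup_labels[OF om fin, of xi ?c] unfolding label_noise_def by (simp add: mult.commute)
  have eq: "scaled_obj \<Theta> m om xi \<nu> \<rho> \<gamma> Gt Xb Xt D - limit_fun \<Theta> \<beta> p G D
     = 1/2 * (\<Sum>k\<in>\<beta>. (label_count om m k / real m - p k) * (?c k)\<^sup>2)
       - \<nu> * (\<Sum>k\<in>\<beta>. (label_noise om xi m k / (real m * \<rho>)) * ?c k)
       + (Gt - G) \<bullet> D + \<gamma> * ((Xb - Xt) \<bullet> D) + \<rho> * \<gamma> / 2 * (norm D)\<^sup>2"
    unfolding scaled_obj_def limit_fun_def qbeta_form_def e1 e2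
    by (simp add: sum_distrib_left sum_subtractf left_diff_distrib inner_diff_left algebra_simps
        sum_divide_distrib)
  have b1: "\<bar>1/2 * (\<Sum>k\<in>\<beta>. (label_count om m k / real m - p k) * (?c k)\<^sup>2)\<bar>
      \<le> 1/2 * (\<Sum>k\<in>\<beta>. \<bar>label_count om m k / real m - p k\<bar>) * (norm D)\<^sup>2"
    using abs_sum_mult_le[OF cb2, of "\<lambda>k. label_count om m k / real m - p k"] by (simp add: abs_mult)
  have b2: "\<bar>\<nu> * (\<Sum>k\<in>\<beta>. (label_noise om xi m k / (real m * \<rho>)) * ?c k)\<bar>
      \<le> \<nu> * ((\<Sum>k\<in>\<beta>. \<bar>label_noise om xi m k / (real m * \<rho>)\<bar>) * norm D)"
    using abs_sum_mult_le[OF cb, of "\<lambda>k. label_noise om xi m k / (real m * \<rho>)"] nu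
    by (simp add: abs_mult mult_left_mono)
  have b3: "\<bar>(Gt - G) \<bullet> D\<bar> \<le> norm (Gt - G) * norm D" by (rule Cauchy_Schwarz_ineq2)
  have b4: "\<bar>\<gamma> * ((Xb - Xt) \<bullet> D)\<bar> \<le> \<gamma> * (norm (Xb - Xt) * norm D)"
    using Cauchy_Schwarz_ineq2[of "Xb - Xt" D] g by (simp add: abs_mult mult_left_mono)
  have b5: "\<bar>\<rho> * \<gamma> / 2 * (norm D)\<^sup>2\<bar> = \<rho> * \<gamma> / 2 * (norm D)\<^sup>2" using r g by simp
  show ?thesis unfolding eq using b1 b2 b3 b4 b5 by (simp add: algebra_simps)
qed

lemma close_to_min_of_uniform_approx:
  fixes Dm Dh D' :: "'v::real_normed_vector" and \<phi> \<psi> :: "'v \<Rightarrow> real"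
  assumes c: "c > 0" and e: "e > 0"
    and growth: "\<phi> Dm \<ge> \<phi> Dh + c * (norm (Dm - Dh))\<^sup>2"
    and opt: "\<psi> Dm \<le> \<psi> D'"
    and dev: "\<And>D. \<bar>\<psi> D - \<phi> D\<bar> \<le> a * (norm D)\<^sup>2 + b * norm D"
    and a: "a \<ge> 0" "a \<le> c / 4" and b: "b \<ge> 0" "b \<le> c * e / 4"
    and T: "\<phi> D' - \<phi> Dh + a * (norm D')\<^sup>2 + b * norm D' + 2 * a * (norm Dh)\<^sup>2 + b * norm Dh
              \<le> c * e\<^sup>2 / 8"
  shows "norm (Dm - Dh) \<le> e"
proof (rule ccontr)
  assume "\<not> norm (Dm - Dh) \<le> e"
  define u where "u = norm (Dm - Dh)"
  define R where "R = norm Dh"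
  have ue: "u > e" using \<open>\<not> norm (Dm - Dh) \<le> e\<close> by (simp add: u_def)
  have u0: "u \<ge> 0" "R \<ge> 0" by (auto simp: u_def R_def)
  have nDm: "norm Dm \<le> R + u" unfolding u_def R_def by (metis norm_triangle_sub)
  have "(norm Dm)\<^sup>2 \<le> (R + u)\<^sup>2" using nDm by (intro power_mono) auto
  also have "\<dots> \<le> 2 * R\<^sup>2 + 2 * u\<^sup>2"
    using zero_le_power2[of "R - u"] by (simp add: power2_eq_square algebra_simps)
  finally have nDm2: "(norm Dm)\<^sup>2 \<le> 2 * R\<^sup>2 + 2 * u\<^sup>2" .
  have "c * u\<^sup>2 \<le> \<phi> D' - \<phi> Dh + a * (norm D')\<^sup>2 + b * norm D' + a * (norm Dm)\<^sup>2 + b * norm Dm"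
    using growth opt dev[of Dm] dev[of D'] unfolding u_def by linarith
  also have "a * (norm Dm)\<^sup>2 \<le> a * (2 * R\<^sup>2 + 2 * u\<^sup>2)" using nDm2 a by (intro mult_left_mono) auto
  also have "b * norm Dm \<le> b * (R + u)" using nDm b by (intro mult_left_mono) auto
  finally have "c * u\<^sup>2 \<le> (\<phi> D' - \<phi> Dh + a * (norm D')\<^sup>2 + b * norm D' + 2 * a * R\<^sup>2 + b * R)
      + 2 * a * u\<^sup>2 + b * u"
    by (simp add: algebra_simps)
  also have "\<dots> \<le> c * e\<^sup>2 / 8 + 2 * a * u\<^sup>2 + b * u" using T unfolding R_def by simp
  finally have i1: "c * u\<^sup>2 \<le> c * e\<^sup>2 / 8 + 2 * a * u\<^sup>2 + b * u" .
  have "2 * a * u\<^sup>2 \<le> c / 2 * u\<^sup>2" using a by (intro mult_right_mono) auto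
  moreover have "b * u \<le> c * e / 4 * u" using b u0 by (intro mult_right_mono) auto
  ultimately have i2: "c / 2 * u\<^sup>2 \<le> c * e\<^sup>2 / 8 + c * e / 4 * u" using i1 by linarith
  have "u * (2 * u - e) > e * (2 * u - e)" using ue e by (intro mult_strict_right_mono) auto
  moreover have "e * (2 * u - e) \<ge> e * e" using ue e by (intro mult_left_mono) auto
  ultimately have "c / 4 * (u * (2 * u - e)) > c / 4 * (e * e)" using c by simp
  then have "c / 2 * u\<^sup>2 - c * e / 4 * u > c * e\<^sup>2 / 4" by (simp add: power2_eq_square algebra_simps)
  moreover have "c * e\<^sup>2 / 4 > c * e\<^sup>2 / 8" using c e by simp
  ultimately show False using i2 by linarith
qed

section \<open>Chebyshev bounds for the sampling frequencies and the noise\<close>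

lemma (in prob_space) integrable_mult_of_square_integrable:
  fixes X Y :: "'a \<Rightarrow> real"
  assumes [measurable]: "X \<in> borel_measurable M" "Y \<in> borel_measurable M"
    and "integrable M (\<lambda>w. (X w)\<^sup>2)" "integrable M (\<lambda>w. (Y w)\<^sup>2)"
  shows "integrable M (\<lambda>w. X w * Y w)"
proof (rule Bochner_Integration.integrable_bound[of _ "\<lambda>w. (X w)\<^sup>2 + (Y w)\<^sup>2"])
  show "integrable M (\<lambda>w. (X w)\<^sup>2 + (Y w)\<^sup>2)" using assms by auto
  show "AE w in M. norm (X w * Y w) \<le> norm ((X w)\<^sup>2 + (Y w)\<^sup>2)"
  proof (intro AE_I2)
    fix w
    have "2 * \<bar>X w\<bar> * \<bar>Y w\<bar> \<le> (X w)\<^sup>2 + (Y w)\<^sup>2"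
      using sum_squares_bound[of "\<bar>X w\<bar>" "\<bar>Y w\<bar>"] by simp
    moreover have "\<bar>X w\<bar> * \<bar>Y w\<bar> \<ge> 0" by simp
    ultimately have "\<bar>X w\<bar> * \<bar>Y w\<bar> \<le> (X w)\<^sup>2 + (Y w)\<^sup>2" by linarith
    then show "norm (X w * Y w) \<le> norm ((X w)\<^sup>2 + (Y w)\<^sup>2)" by (simp add: abs_mult)
  qed
qed measurable

lemma (in prob_space) expectation_square_sum_uncorrelated:
  fixes W :: "nat \<Rightarrow> 'a \<Rightarrow> real"
  assumes meas: "\<And>i. W i \<in> borel_measurable M"
    and sq: "\<And>i. integrable M (\<lambda>w. (W i w)\<^sup>2)"
    and orth: "\<And>i j. i \<noteq> j \<Longrightarrow> expectation (\<lambda>w. W i w * W j w) = 0"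
  shows "integrable M (\<lambda>w. (\<Sum>i<m. W i w)\<^sup>2)"
    and "expectation (\<lambda>w. (\<Sum>i<m. W i w)\<^sup>2) = (\<Sum>i<m. expectation (\<lambda>w. (W i w)\<^sup>2))"
proof -
  have intp: "integrable M (\<lambda>w. W i w * W j w)" for i j
    by (rule integrable_mult_of_square_integrable[OF meas meas sq sq])
  have sqS: "(\<Sum>i<m. W i w)\<^sup>2 = (\<Sum>i<m. \<Sum>j<m. W i w * W j w)" for w
    by (simp add: power2_eq_square sum_product)
  show "integrable M (\<lambda>w. (\<Sum>i<m. W i w)\<^sup>2)" unfolding sqS using intp by auto
  have "expectation (\<lambda>w. (\<Sum>i<m. W i w)\<^sup>2) = (\<Sum>i<m. \<Sum>j<m. expectation (\<lambda>w. W i w * W j w))"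
    unfolding sqS using intp by (simp add: Bochner_Integration.integral_sum)
  also have "\<dots> = (\<Sum>i<m. \<Sum>j<m. if j = i then expectation (\<lambda>w. (W i w)\<^sup>2) else 0)"
    using orth by (intro sum.cong refl) (auto simp: power2_eq_square)
  finally show "expectation (\<lambda>w. (\<Sum>i<m. W i w)\<^sup>2) = (\<Sum>i<m. expectation (\<lambda>w. (W i w)\<^sup>2))"
    by simp
qed

lemma (in prob_space) prob_abs_sum_uncorrelated_gt:
  fixes W :: "nat \<Rightarrow> 'a \<Rightarrow> real"
  assumes meas: "\<And>i. W i \<in> borel_measurable M"
    and sq: "\<And>i. integrable M (\<lambda>w. (W i w)\<^sup>2)"
    and orth: "\<And>i j. i \<noteq> j \<Longrightarrow> expectation (\<lambda>w. W i w * W j w) = 0"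
    and var: "\<And>i. expectation (\<lambda>w. (W i w)\<^sup>2) \<le> 1"
    and t: "t > 0"
  shows "prob {w\<in>space M. \<bar>\<Sum>i<m. W i w\<bar> > t} \<le> real m / t\<^sup>2"
proof -
  have [measurable]: "W i \<in> borel_measurable M" for i by (rule meas)
  let ?S = "\<lambda>w. \<Sum>i<m. W i w"
  have intS: "integrable M (\<lambda>w. (?S w)\<^sup>2)"
    by (rule expectation_square_sum_uncorrelated(1)[OF meas sq orth])
  have "expectation (\<lambda>w. (?S w)\<^sup>2) = (\<Sum>i<m. expectation (\<lambda>w. (W i w)\<^sup>2))"
    by (rule expectation_square_sum_uncorrelated(2)[OF meas sq orth])
  also have "\<dots> \<le> (\<Sum>i<m. 1)" using var by (intro sum_mono) auto
  finally have ES: "expectation (\<lambda>w. (?S w)\<^sup>2) \<le> real m" by simp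
  have "prob {w\<in>space M. \<bar>?S w\<bar> > t} \<le> prob {w\<in>space M. (?S w)\<^sup>2 \<ge> t\<^sup>2}"
  proof (rule finite_measure_mono)
    show "{w\<in>space M. \<bar>?S w\<bar> > t} \<subseteq> {w\<in>space M. (?S w)\<^sup>2 \<ge> t\<^sup>2}"
    proof
      fix w assume "w \<in> {w\<in>space M. \<bar>?S w\<bar> > t}"
      then have "\<bar>?S w\<bar> > t" "w \<in> space M" by auto
      then have "t\<^sup>2 \<le> \<bar>?S w\<bar>\<^sup>2" using t by (intro power_mono) auto
      then show "w \<in> {w\<in>space M. (?S w)\<^sup>2 \<ge> t\<^sup>2}" using \<open>w \<in> space M\<close> by simp
    qed
    show "{w\<in>space M. (?S w)\<^sup>2 \<ge> t\<^sup>2} \<in> events" by measurable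
  qed
  also have "\<dots> \<le> expectation (\<lambda>w. (?S w)\<^sup>2) / t\<^sup>2"
    by (rule integral_Markov_inequality_measure[OF intS, of "space M"]) (use t in auto)
  also have "\<dots> \<le> real m / t\<^sup>2" using ES t by (intro divide_right_mono) auto
  finally show ?thesis .
qed

locale sampling_model = prob_space M for M :: "'a measure" +
  fixes \<omega> :: "nat \<Rightarrow> 'a \<Rightarrow> nat" and \<xi> :: "nat \<Rightarrow> 'a \<Rightarrow> real"
    and p :: "nat \<Rightarrow> real" and \<beta> :: "nat set"
  assumes \<omega>_rv: "\<forall>i. \<omega> i \<in> measurable M (count_space UNIV)"
    and \<xi>_rv: "\<forall>i. \<xi> i \<in> borel_measurable M"
    and indep: "indep_vars (\<lambda>j. case j of Inl _ \<Rightarrow> borel | Inr _ \<Rightarrow> borel)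
                  (\<lambda>j. case j of Inl i \<Rightarrow> (\<lambda>w. real (\<omega> i w)) | Inr i \<Rightarrow> \<xi> i) UNIV"
    and \<omega>_dist_beta: "\<forall>i. \<forall>k\<in>\<beta>. measure M {w\<in>space M. \<omega> i w = k} = p k"
    and \<xi>_int: "\<forall>i. integrable M (\<xi> i) \<and> integrable M (\<lambda>w. (\<xi> i w)\<^sup>2)"
    and \<xi>_mean: "\<forall>i. expectation (\<xi> i) = 0"
    and \<xi>_var: "\<forall>i. expectation (\<lambda>w. (\<xi> i w)\<^sup>2) = 1"
begin

lemma \<omega>_measurable [measurable]: "\<omega> i \<in> measurable M (count_space UNIV)"
  using \<omega>_rv by blast

lemma \<xi>_measurable [measurable]: "\<xi> i \<in> borel_measurable M"
  using \<xi>_rv by blast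

definition hit :: "nat \<Rightarrow> nat \<Rightarrow> 'a \<Rightarrow> real" where
  "hit k i w = (if \<omega> i w = k then 1 else 0)"

lemma hit_measurable [measurable]: "hit k i \<in> borel_measurable M"
  unfolding hit_def by measurable

lemma integrable_hit: "integrable M (hit k i)"
  by (rule integrable_const_bound[where B=1]) (auto simp: hit_def)

lemma expectation_hit: "k \<in> \<beta> \<Longrightarrow> expectation (hit k i) = p k"
proof -
  assume k: "k \<in> \<beta>"
  have "expectation (hit k i) = expectation (indicator {w\<in>space M. \<omega> i w = k})"
    by (intro Bochner_Integration.integral_cong) (auto simp: hit_def indicator_def)
  also have "\<dots> = prob {w\<in>space M. \<omega> i w = k}" by simp
  finally show ?thesis using \<omega>_dist_beta k by simp
qed

definition hit_or_noise :: "nat \<Rightarrow> nat + nat \<Rightarrow> 'a \<Rightarrow> real" where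
  "hit_or_noise k j w = (case j of Inl i \<Rightarrow> hit k i w | Inr i \<Rightarrow> \<xi> i w)"

lemma hit_or_noise_simps [simp]:
  "hit_or_noise k (Inl i) = hit k i" "hit_or_noise k (Inr i) = \<xi> i"
  by (simp_all add: hit_or_noise_def fun_eq_iff)

lemma indep_hit_or_noise: "indep_vars (\<lambda>_. borel) (hit_or_noise k) UNIV"
proof -
  have e: "(\<lambda>j::nat+nat. case j of Inl _ \<Rightarrow> borel | Inr _ \<Rightarrow> (borel :: real measure)) = (\<lambda>_. borel)"
    by (rule ext) (simp split: sum.split)
  define X0 where "X0 = (\<lambda>j. case j of Inl i \<Rightarrow> (\<lambda>w. real (\<omega> i w)) | Inr i \<Rightarrow> \<xi> i)"
  define h where "h j x = (case j of Inl _ \<Rightarrow> (if x = real k then 1 else 0) | Inr _ \<Rightarrow> x)"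
    for j :: "nat + nat" and x :: real
  have "indep_vars (\<lambda>_. borel) X0 UNIV" using indep unfolding e X0_def .
  then have "indep_vars (\<lambda>_. borel) (\<lambda>j w. h j (X0 j w)) UNIV"
  proof (rule indep_vars_compose2)
    show "h j \<in> borel_measurable borel" for j unfolding h_def by (cases j) auto
  qed
  moreover have "(\<lambda>j w. h j (X0 j w)) = hit_or_noise k"
    by (intro ext) (simp add: h_def X0_def hit_or_noise_def hit_def split: sum.split)
  ultimately show ?thesis by simp
qed

lemma expectation_prod_hit_or_noise:
  assumes "finite I"
  shows "expectation (\<lambda>w. \<Prod>j\<in>I. hit_or_noise k j w) = (\<Prod>j\<in>I. expectation (hit_or_noise k j))"
proof -
  have "integrable M (hit_or_noise k j)" for j
    using integrable_hit \<xi>_int by (cases j) auto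
  then show ?thesis
    using indep_vars_lebesgue_integral[of I "hit_or_noise k"] assms
      indep_vars_subset[OF indep_hit_or_noise] by auto
qed

lemma p_range: "k \<in> \<beta> \<Longrightarrow> 0 \<le> p k \<and> p k \<le> 1"
  using \<omega>_dist_beta by (metis measure_nonneg prob_le_1)

lemma prob_label_freq_deviation:
  assumes k: "k \<in> \<beta>" and m: "m > 0" and s: "s > 0"
  shows "prob {w\<in>space M. \<bar>label_count (\<lambda>i. \<omega> i w) m k / real m - p k\<bar> > s} \<le> 1 / (real m * s\<^sup>2)"
proof -
  define W where "W i w = hit k i w - p k" for i w
  have [measurable]: "W i \<in> borel_measurable M" for i unfolding W_def by measurable
  have W2b: "(W i w)\<^sup>2 \<le> 1" for i w
  proof -
    have "\<bar>W i w\<bar> \<le> 1" using p_range[OF k] by (auto simp: W_def hit_def)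
    then show ?thesis by (metis abs_le_square_iff abs_one one_power2)
  qed
  have sq: "integrable M (\<lambda>w. (W i w)\<^sup>2)" for i
    by (rule integrable_const_bound[where B=1]) (use W2b in auto)
  have orth: "expectation (\<lambda>w. W i w * W j w) = 0" if ij: "i \<noteq> j" for i j
  proof -
    have "expectation (\<lambda>w. hit k i w * hit k j w) = p k * p k"
      using expectation_prod_hit_or_noise[of "{Inl i, Inl j}" k] ij expectation_hit[OF k]
      by simp
    moreover have "integrable M (\<lambda>w. hit k i w * hit k j w)"
      by (rule integrable_const_bound[where B=1]) (auto simp: hit_def)
    moreover have "(\<lambda>w. W i w * W j w)
        = (\<lambda>w. hit k i w * hit k j w - p k * hit k i w - p k * hit k j w + p k * p k)"
      by (rule ext) (simp add: W_def algebra_simps)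
    ultimately show ?thesis using integrable_hit expectation_hit[OF k] by (simp add: prob_space)
  qed
  have "expectation (\<lambda>w. (W i w)\<^sup>2) \<le> expectation (\<lambda>w. 1)" for i
    using sq W2b by (intro integral_mono) auto
  then have var: "expectation (\<lambda>w. (W i w)\<^sup>2) \<le> 1" for i by (simp add: prob_space)
  have "(\<Sum>i<m. W i w) = real m * (label_count (\<lambda>i. \<omega> i w) m k / real m - p k)" for w
    using m by (simp add: W_def hit_def label_count_def sum_subtractf field_simps)
  then have "{w\<in>space M. \<bar>label_count (\<lambda>i. \<omega> i w) m k / real m - p k\<bar> > s}
        = {w\<in>space M. \<bar>\<Sum>i<m. W i w\<bar> > real m * s}"
    using m by (auto simp: abs_mult)
  also have "prob \<dots> \<le> real m / (real m * s)\<^sup>2"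
    by (rule prob_abs_sum_uncorrelated_gt) (use sq orth var m s in auto)
  also have "\<dots> = 1 / (real m * s\<^sup>2)" using m s by (simp add: power2_eq_square field_simps)
  finally show ?thesis .
qed

lemma prob_label_noise_deviation:
  assumes m: "m > 0" and r: "\<rho> > 0" and s: "s > 0"
  shows "prob {w\<in>space M. \<bar>label_noise (\<lambda>i. \<omega> i w) (\<lambda>i. \<xi> i w) m k / (real m * \<rho>)\<bar> > s}
    \<le> 1 / (real m * \<rho>\<^sup>2 * s\<^sup>2)"
proof -
  define W where "W i w = \<xi> i w * hit k i w" for i w
  have [measurable]: "W i \<in> borel_measurable M" for i unfolding W_def by measurable
  have W2b: "(W i w)\<^sup>2 \<le> (\<xi> i w)\<^sup>2" for i w by (simp add: W_def hit_def)
  have sq: "integrable M (\<lambda>w. (W i w)\<^sup>2)" for i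
  proof (rule Bochner_Integration.integrable_bound[of _ "\<lambda>w. (\<xi> i w)\<^sup>2"])
    show "integrable M (\<lambda>w. (\<xi> i w)\<^sup>2)" using \<xi>_int by blast
    show "AE w in M. norm ((W i w)\<^sup>2) \<le> norm ((\<xi> i w)\<^sup>2)" using W2b by simp
  qed measurable
  have orth: "expectation (\<lambda>w. W i w * W j w) = 0" if ij: "i \<noteq> j" for i j
  proof -
    have "expectation (\<lambda>w. \<Prod>j\<in>{Inr i, Inl i, Inl j, Inr j}. hit_or_noise k j w)
        = (\<Prod>j\<in>{Inr i, Inl i, Inl j, Inr j}. expectation (hit_or_noise k j))"
      by (rule expectation_prod_hit_or_noise) simp
    also have "\<dots> = 0" using ij \<xi>_mean by simp
    finally show ?thesis using ij by (simp add: W_def mult_ac)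
  qed
  have "expectation (\<lambda>w. (W i w)\<^sup>2) \<le> expectation (\<lambda>w. (\<xi> i w)\<^sup>2)" for i
    using sq \<xi>_int W2b by (intro integral_mono) auto
  then have var: "expectation (\<lambda>w. (W i w)\<^sup>2) \<le> 1" for i using \<xi>_var by simp
  have mr: "real m * \<rho> > 0" using m r by simp
  have "(\<Sum>i<m. W i w) = label_noise (\<lambda>i. \<omega> i w) (\<lambda>i. \<xi> i w) m k" for w
    unfolding label_noise_def by (intro sum.cong refl) (simp add: W_def hit_def)
  moreover have "\<bar>x / (real m * \<rho>)\<bar> > s \<longleftrightarrow> \<bar>x\<bar> > real m * \<rho> * s" for x
    using mr by (simp add: less_divide_eq mult.commute)
  ultimately have "{w\<in>space M. \<bar>label_noise (\<lambda>i. \<omega> i w) (\<lambda>i. \<xi> i w) m k / (real m * \<rho>)\<bar> > s}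
        = {w\<in>space M. \<bar>\<Sum>i<m. W i w\<bar> > real m * \<rho> * s}"
    by auto
  also have "prob \<dots> \<le> real m / (real m * \<rho> * s)\<^sup>2"
    by (rule prob_abs_sum_uncorrelated_gt) (use sq orth var m s r in auto)
  also have "\<dots> = 1 / (real m * \<rho>\<^sup>2 * s\<^sup>2)" using m s r by (simp add: power2_eq_square field_simps)
  finally show ?thesis .
qed

lemma prob_label_outside_beta:
  assumes fin: "finite \<beta>" and ps: "(\<Sum>k\<in>\<beta>. p k) = 1"
  shows "prob {w\<in>space M. \<exists>i<m. \<omega> i w \<notin> \<beta>} = 0"
proof -
  have "prob {w\<in>space M. \<omega> i w \<in> \<beta>} = (\<Sum>k\<in>\<beta>. prob {w\<in>space M. \<omega> i w = k})" for i
  proof -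
    have "{w\<in>space M. \<omega> i w \<in> \<beta>} = (\<Union>k\<in>\<beta>. {w\<in>space M. \<omega> i w = k})" by auto
    moreover have "prob (\<Union>k\<in>\<beta>. {w\<in>space M. \<omega> i w = k}) = (\<Sum>k\<in>\<beta>. prob {w\<in>space M. \<omega> i w = k})"
      by (rule measure_finite_Union) (auto simp: fin disjoint_family_on_def)
    ultimately show ?thesis by simp
  qed
  then have "prob {w\<in>space M. \<omega> i w \<in> \<beta>} = 1" for i using \<omega>_dist_beta ps by simp
  moreover have "{w\<in>space M. \<omega> i w \<notin> \<beta>} = space M - {w\<in>space M. \<omega> i w \<in> \<beta>}" for i by auto
  ultimately have zero: "prob {w\<in>space M. \<omega> i w \<notin> \<beta>} = 0" for i
    using prob_compl[of "{w\<in>space M. \<omega> i w \<in> \<beta>}"] by simp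
  have "prob (\<Union>i\<in>{..<m}. {w\<in>space M. \<omega> i w \<notin> \<beta>}) \<le> (\<Sum>i<m. prob {w\<in>space M. \<omega> i w \<notin> \<beta>})"
    by (rule measure_UNION_le) auto
  moreover have "{w\<in>space M. \<exists>i<m. \<omega> i w \<notin> \<beta>} = (\<Union>i\<in>{..<m}. {w\<in>space M. \<omega> i w \<notin> \<beta>})" by auto
  ultimately show ?thesis using zero by (simp add: measure_nonneg antisym)
qed

end

section \<open>The cone of feasible directions\<close>

definition dir_cone :: "bool \<Rightarrow> (nat \<Rightarrow> ('n::{finite,linorder}) cmat) \<Rightarrow> nat set \<Rightarrow> nat \<Rightarrow> 'n cmat
    \<Rightarrow> 'n cmat set" where
  "dir_cone b \<Theta> \<alpha> r P = {D. D \<in> Sn b \<and> (\<forall>k\<in>\<alpha>. minner (\<Theta> k) D = 0) \<and> psd (lower_block r P D)}"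

lemma dir_cone_alt:
  "dir_cone b \<Theta> \<alpha> r P
     = {D. D \<in> Sn b \<and> (\<forall>k\<in>\<alpha>. \<Theta> k \<bullet> D = 0) \<and> (\<forall>v. Re (qform D (P *v tail_proj r v)) \<ge> 0)}"
  unfolding dir_cone_def minner_inner by (auto simp: Sn_def psd_lower_block_iff)

lemma closed_dir_cone: "closed (dir_cone b \<Theta> \<alpha> r P)"
proof -
  have "dir_cone b \<Theta> \<alpha> r P = Sn b \<inter> (\<Inter>k\<in>\<alpha>. {D. \<Theta> k \<bullet> D = 0})
      \<inter> (\<Inter>v. {D. Re (qform D (P *v tail_proj r v)) \<ge> 0})"
    unfolding dir_cone_alt by auto
  moreover have "closed {D. \<Theta> k \<bullet> D = 0}" for k by (intro closed_Collect_eq continuous_intros)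
  moreover have "closed {D. Re (qform D w) \<ge> 0}" for w
    unfolding qform_def by (intro closed_Collect_le continuous_intros)
  ultimately show ?thesis using closed_Sn by (auto intro!: closed_Int closed_INT)
qed

lemma convex_dir_cone: "convex (dir_cone b \<Theta> \<alpha> r P)"
  unfolding dir_cone_alt
proof (intro convexI, clarify, intro conjI ballI allI)
  fix x y :: "'a cmat" and u v :: real
  assume x: "x \<in> Sn b" "\<forall>k\<in>\<alpha>. \<Theta> k \<bullet> x = 0" "\<forall>w. 0 \<le> Re (qform x (P *v tail_proj r w))"
    and y: "y \<in> Sn b" "\<forall>k\<in>\<alpha>. \<Theta> k \<bullet> y = 0" "\<forall>w. 0 \<le> Re (qform y (P *v tail_proj r w))"
    and uv: "0 \<le> u" "0 \<le> v" "u + v = 1"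
  show "u *\<^sub>R x + v *\<^sub>R y \<in> Sn b" using x y by (intro Sn_add Sn_scaleR)
  show "\<Theta> k \<bullet> (u *\<^sub>R x + v *\<^sub>R y) = 0" if "k \<in> \<alpha>" for k
    using x y that by (simp add: inner_add_right)
  show "0 \<le> Re (qform (u *\<^sub>R x + v *\<^sub>R y) (P *v tail_proj r w))" for w
    using x(3)[rule_format, of w] y(3)[rule_format, of w] uv by (simp add: qform_add qform_scaleR)
qed

lemma zero_in_dir_cone: "0 \<in> dir_cone b \<Theta> \<alpha> r P"
  unfolding dir_cone_alt by (simp add: Sn_zero qform_def)

lemma limit_problem_strong_min:
  fixes \<Theta> :: "nat \<Rightarrow> ('n::{finite,linorder}) cmat" and P G :: "'n cmat"
  assumes orth: "\<forall>k\<in>{1..d}. \<forall>l\<in>{1..d}. minner (\<Theta> k) (\<Theta> l) = (if k = l then 1 else 0)"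
    and span: "\<forall>X\<in>Sn b. \<exists>c. X = (\<Sum>k=1..d. c k *\<^sub>R \<Theta> k)"
    and bdef: "\<beta> = {1..d} - \<alpha>"
    and ppos: "\<forall>k\<in>\<beta>. p k > 0" and psum: "(\<Sum>k\<in>\<beta>. p k) = 1"
  shows "\<exists>c>0. \<exists>Dh\<in>dir_cone b \<Theta> \<alpha> r P.
           (\<forall>D\<in>dir_cone b \<Theta> \<alpha> r P. limit_fun \<Theta> \<beta> p G Dh \<le> limit_fun \<Theta> \<beta> p G D)
         \<and> (\<forall>D\<in>dir_cone b \<Theta> \<alpha> r P.
              limit_fun \<Theta> \<beta> p G D \<ge> limit_fun \<Theta> \<beta> p G Dh + c * (norm (D - Dh))\<^sup>2)"
proof -
  let ?K = "dir_cone b \<Theta> \<alpha> r P"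
  let ?f = "limit_fun \<Theta> \<beta> p G"
  have finb: "finite \<beta>" using bdef by simp
  have "\<beta> \<noteq> {}" using psum by auto
  define pm where "pm = Min (p ` \<beta>)"
  have "pm \<in> p ` \<beta>" unfolding pm_def using finb \<open>\<beta> \<noteq> {}\<close> by (intro Min_in) auto
  then have pm: "pm > 0" "\<forall>k\<in>\<beta>. pm \<le> p k" using ppos finb by (auto simp: pm_def)
  have coer: "qbeta_form \<Theta> \<beta> p D \<ge> pm * (norm D)\<^sup>2"
    if "D \<in> Sn b" "\<forall>k\<in>\<alpha>. \<Theta> k \<bullet> D = 0" for D
    unfolding bdef by (rule qbeta_form_coercive[OF orth span that]) (use pm bdef in auto)
  then have "\<forall>D\<in>?K. qbeta_form \<Theta> \<beta> p D \<ge> pm * (norm D)\<^sup>2" unfolding dir_cone_alt by blast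
  then obtain Dh where Dh: "Dh \<in> ?K" and opt: "\<forall>D\<in>?K. ?f Dh \<le> ?f D"
    using limit_fun_has_min[OF closed_dir_cone zero_in_dir_cone pm(1)] by blast
  have "?f D \<ge> ?f Dh + pm / 2 * (norm (D - Dh))\<^sup>2" if D: "D \<in> ?K" for D
  proof -
    have "?f D \<ge> ?f Dh + 1/2 * qbeta_form \<Theta> \<beta> p (D - Dh)"
      using limit_fun_min_growth[OF convex_dir_cone Dh opt D] ppos by (simp add: less_imp_le)
    moreover have "qbeta_form \<Theta> \<beta> p (D - Dh) \<ge> pm * (norm (D - Dh))\<^sup>2"
      using D Dh unfolding dir_cone_alt by (intro coer) (auto intro: Sn_diff simp: inner_diff_right)
    ultimately show ?thesis by simp
  qed
  then show ?thesis using pm Dh opt by (intro exI[of _ "pm / 2"]) auto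
qed

text \<open>Slater's condition: adding a small multiple of \<open>X0 - Xb\<close>, with \<open>X0\<close> positive definite, makes a
  direction of the cone uniformly positive on the column space of \<open>P\<^sub>2\<close>, hence feasible for all
  small step sizes.\<close>

lemma psd_along_slater_perturbation:
  fixes P Xb X0 Dh :: "('n::{finite,linorder}) cmat"
  assumes u: "unitary P" and X: "Xb = P ** diagm l ** ctrans P"
    and z: "\<forall>i. r \<le> pos i \<longrightarrow> l $ i = 0"
    and lm: "lm > 0" and lpos: "\<forall>i. pos i < r \<longrightarrow> l $ i \<ge> lm"
    and XbS: "Xb \<in> Sn b" and Dh: "Dh \<in> dir_cone b \<Theta> \<alpha> r P" and X0: "X0 \<in> Sn b" "pd X0"
    and eps: "\<epsilon> > 0"
  shows "\<exists>t0>0. \<forall>t. 0 \<le> t \<and> t \<le> t0 \<longrightarrow> psd (Xb + t *\<^sub>R (Dh + \<epsilon> *\<^sub>R (X0 - Xb)))"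
proof -
  let ?H = "Dh + \<epsilon> *\<^sub>R (X0 - Xb)"
  obtain \<mu> where mu: "\<mu> > 0" "\<forall>u. Re (qform X0 u) \<ge> \<mu> * (norm u)\<^sup>2"
    using pd_imp_uniformly_pos[OF X0(2)] by blast
  have DhS: "Dh \<in> Sn b" and Dhq: "\<And>v. Re (qform Dh (P *v tail_proj r v)) \<ge> 0"
    using Dh unfolding dir_cone_alt by auto
  show ?thesis
  proof (rule psd_add_small_multiple[OF u X lm, where \<kappa> = "\<epsilon> * \<mu>"])
    show "herm Xb" "herm ?H" using DhS X0 XbS by (simp_all add: Sn_def herm_add herm_scaleR herm_diff)
    show "\<epsilon> * \<mu> > 0" using eps mu by simp
    show "Re (qform ?H (P *v tail_proj r v)) \<ge> (\<epsilon> * \<mu>) * (norm (tail_proj r v))\<^sup>2" for v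
    proof -
      have "qform Xb (P *v tail_proj r v) = 0" by (rule qform_tail_decomp_zero[OF u X]) (use z in auto)
      then have "Re (qform ?H (P *v tail_proj r v))
          = Re (qform Dh (P *v tail_proj r v)) + \<epsilon> * Re (qform X0 (P *v tail_proj r v))"
        by (simp add: qform_add qform_scaleR qform_diff)
      moreover have "\<mu> * (norm (tail_proj r v))\<^sup>2 \<le> Re (qform X0 (P *v tail_proj r v))"
        using mu(2) unitary_norm[OF u] by metis
      then have "\<epsilon> * (\<mu> * (norm (tail_proj r v))\<^sup>2) \<le> \<epsilon> * Re (qform X0 (P *v tail_proj r v))"
        using eps by (intro mult_left_mono) auto
      ultimately show ?thesis using Dhq[of v] by (simp add: mult.assoc)
    qed
  qed (use lpos z in auto)
qed

section \<open>Consistency of the rescaled estimator\<close>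

lemma exists_deviation_budget:
  fixes c e A B :: real
  assumes "c > 0" "e > 0" "A \<ge> 0" "B \<ge> 0"
  shows "\<exists>a0 b0. a0 > 0 \<and> b0 > 0 \<and> a0 \<le> c / 4 \<and> b0 \<le> c * e / 4 \<and> a0 * A + b0 * B \<le> c * e\<^sup>2 / 16"
proof -
  define a0 where "a0 = min (c / 4) (c * e\<^sup>2 / (32 * (A + 1)))"
  define b0 where "b0 = min (c * e / 4) (c * e\<^sup>2 / (32 * (B + 1)))"
  have budget: "x * Y \<le> c * e\<^sup>2 / 32" if "x \<le> c * e\<^sup>2 / (32 * (Y + 1))" "x > 0" "Y \<ge> 0" for x Y
  proof -
    have "x * Y \<le> x * (Y + 1)" using that by simp
    also have "\<dots> \<le> c * e\<^sup>2 / (32 * (Y + 1)) * (Y + 1)" using that by (intro mult_right_mono) auto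
    also have "\<dots> = c * e\<^sup>2 / 32" using that by (simp add: field_simps)
    finally show ?thesis .
  qed
  have "a0 > 0" "b0 > 0" using assms by (auto simp: a0_def b0_def)
  moreover have "a0 \<le> c / 4" "b0 \<le> c * e / 4" unfolding a0_def b0_def by (rule min.cobounded1)+
  moreover have "a0 * A \<le> c * e\<^sup>2 / 32" "b0 * B \<le> c * e\<^sup>2 / 32"
    using budget \<open>a0 > 0\<close> \<open>b0 > 0\<close> assms unfolding a0_def b0_def by (meson min.cobounded2)+
  ultimately show ?thesis by (intro exI[of _ a0] exI[of _ b0]) auto
qed

text \<open>The hypotheses of the main theorem that the argument needs.\<close>

locale estimation_setting = sampling_model M \<omega> \<xi> p \<beta>
  for M :: "'a measure" and \<omega> \<xi> p \<beta> +
  fixes realcase :: bool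
    and \<Theta> :: "nat \<Rightarrow> ('n::{finite,linorder}) cmat"
    and d :: nat and \<alpha> :: "nat set"
    and Xbar Pbar :: "'n cmat" and r :: nat and \<nu> :: real
    and f :: "(real, 'n) vec \<Rightarrow> (real, 'n) vec"
    and Xt Xh :: "nat \<Rightarrow> 'a \<Rightarrow> 'n cmat"
    and \<rho> :: "nat \<Rightarrow> real" and \<gamma> :: "nat \<Rightarrow> 'a \<Rightarrow> real"
  assumes basis_orth: "\<forall>k\<in>{1..d}. \<forall>l\<in>{1..d}. minner (\<Theta> k) (\<Theta> l) = (if k = l then 1 else 0)"
    and basis_span: "\<forall>X\<in>Sn realcase. \<exists>c. X = (\<Sum>k=1..d. c k *\<^sub>R \<Theta> k)"
    and beta_def: "\<beta> = {1..d} - \<alpha>"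
    and p_pos: "\<forall>k\<in>\<beta>. p k > 0"
    and p_sum: "(\<Sum>k\<in>\<beta>. p k) = 1"
    and Xbar_S: "Xbar \<in> Sn realcase" and Xbar_psd: "psd Xbar"
    and rank_Xbar: "rank Xbar = r" and r_pos: "r \<ge> 1"
    and Pbar_unitary: "unitary Pbar"
    and Xbar_decomp: "Xbar = Pbar ** diagm (eigvals Xbar) ** ctrans Pbar"
    and \<nu>_pos: "\<nu> > 0"
    and F_cont: "continuous (at Xbar within {X\<in>Sn realcase. psd X}) (spectral_op f)"
    and Xt_rv: "\<forall>m. Xt m \<in> borel_measurable M"
    and Xt_psd: "\<forall>m. \<forall>w\<in>space M. Xt m w \<in> Sn realcase \<and> psd (Xt m w)"
    and Xt_conv: "conv_prob M Xt Xbar"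
    and \<rho>_pos: "\<forall>m. \<rho> m > 0"
    and \<gamma>_rv: "\<forall>m. \<gamma> m \<in> borel_measurable M"
    and \<gamma>_nonneg: "\<forall>m. \<forall>w\<in>space M. \<gamma> m w \<ge> 0"
    and Xh_opt: "\<forall>m. \<forall>w\<in>space M.
       (Xh m w \<in> Sn realcase \<and> psd (Xh m w) \<and>
        (\<forall>k\<in>\<alpha>. minner (\<Theta> k) (Xh m w) = minner (\<Theta> k) Xbar)) \<and>
       (\<forall>X. X \<in> Sn realcase \<and> psd X \<and> (\<forall>k\<in>\<alpha>. minner (\<Theta> k) X = minner (\<Theta> k) Xbar) \<longrightarrow>
          est_obj \<Theta> f m (\<lambda>i. minner (\<Theta> (\<omega> i w)) Xbar + \<nu> * \<xi> i w) (\<lambda>i. \<omega> i w)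
                  (\<rho> m) (\<gamma> m w) (Xt m w) (Xh m w)
          \<le> est_obj \<Theta> f m (\<lambda>i. minner (\<Theta> (\<omega> i w)) Xbar + \<nu> * \<xi> i w) (\<lambda>i. \<omega> i w)
                  (\<rho> m) (\<gamma> m w) (Xt m w) X)"
    and slater: "\<exists>X0\<in>Sn realcase. pd X0 \<and> (\<forall>k\<in>\<alpha>. minner (\<Theta> k) X0 = minner (\<Theta> k) Xbar)"
    and \<rho>_lim: "\<rho> \<longlonglongrightarrow> 0"
    and \<rho>_sqrt: "filterlim (\<lambda>m. sqrt (real m) * \<rho> m) at_top sequentially"
    and \<gamma>_Op1: "bounded_prob M \<gamma>"
begin

abbreviation "Gbar \<equiv> mat 1 - spectral_op f Xbar"
abbreviation "Kdir \<equiv> dir_cone realcase \<Theta> \<alpha> r Pbar"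
abbreviation "\<phi> \<equiv> limit_fun \<Theta> \<beta> p Gbar"
abbreviation "err m w \<equiv> (1 / \<rho> m) *\<^sub>R (Xh m w - Xbar)"
abbreviation "\<psi> m w \<equiv> scaled_obj \<Theta> m (\<lambda>i. \<omega> i w) (\<lambda>i. \<xi> i w) \<nu> (\<rho> m) (\<gamma> m w)
                         (mat 1 - spectral_op f (Xt m w)) Xbar (Xt m w)"

lemma \<gamma>_measurable [measurable]: "\<gamma> m \<in> borel_measurable M"
  using \<gamma>_rv by blast

lemma Xt_measurable [measurable]: "Xt m \<in> borel_measurable M"
  using Xt_rv by blast

lemma finite_beta: "finite \<beta>"
  using beta_def by simp

lemma card_beta_pos: "card \<beta> > 0"
  using p_sum finite_beta by (metis card_gt_0_iff sum.empty zero_neq_one)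

lemma eigvals_Xbar_tail: "\<forall>i. r \<le> pos i \<longrightarrow> eigvals Xbar $ i = 0"
  by (rule eigvals_rank_split(1)[OF Xbar_psd rank_Xbar r_pos Pbar_unitary Xbar_decomp])

lemma limit_problem_min:
  "\<exists>c>0. \<exists>Dh\<in>Kdir. (\<forall>D\<in>Kdir. \<phi> Dh \<le> \<phi> D) \<and> (\<forall>D\<in>Kdir. \<phi> D \<ge> \<phi> Dh + c * (norm (D - Dh))\<^sup>2)"
  by (rule limit_problem_strong_min[OF basis_orth basis_span beta_def p_pos p_sum])

lemma err_in_Kdir:
  assumes "w \<in> space M"
  shows "err m w \<in> Kdir"
proof -
  have Xh: "Xh m w \<in> Sn realcase" "psd (Xh m w)" "\<forall>k\<in>\<alpha>. minner (\<Theta> k) (Xh m w) = minner (\<Theta> k) Xbar"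
    using Xh_opt assms by blast+
  have r: "\<rho> m > 0" using \<rho>_pos by blast
  have S: "err m w \<in> Sn realcase" using Xh Xbar_S by (intro Sn_scaleR Sn_diff)
  moreover have "\<forall>k\<in>\<alpha>. minner (\<Theta> k) (err m w) = 0"
    using Xh by (simp add: minner_inner inner_diff_right)
  moreover have "psd (lower_block r Pbar (err m w))"
  proof (rule psd_lower_block_of_psd_add[OF Pbar_unitary Xbar_decomp])
    show "herm (err m w)" using S by (simp add: Sn_def)
    show "psd (Xbar + \<rho> m *\<^sub>R err m w)" using Xh r by simp
  qed (use r eigvals_Xbar_tail in auto)
  ultimately show ?thesis unfolding dir_cone_def by blast
qed

lemma \<psi>_err_le:
  assumes w: "w \<in> space M" and H: "H \<in> Sn realcase" "\<forall>k\<in>\<alpha>. \<Theta> k \<bullet> H = 0"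
    and psd: "psd (Xbar + \<rho> m *\<^sub>R H)"
  shows "\<psi> m w (err m w) \<le> \<psi> m w H"
proof -
  have r: "\<rho> m > 0" using \<rho>_pos by blast
  let ?obj = "est_obj \<Theta> f m (\<lambda>i. minner (\<Theta> (\<omega> i w)) Xbar + \<nu> * \<xi> i w) (\<lambda>i. \<omega> i w)
                (\<rho> m) (\<gamma> m w) (Xt m w)"
  have "Xbar + \<rho> m *\<^sub>R H \<in> Sn realcase \<and> psd (Xbar + \<rho> m *\<^sub>R H)
      \<and> (\<forall>k\<in>\<alpha>. minner (\<Theta> k) (Xbar + \<rho> m *\<^sub>R H) = minner (\<Theta> k) Xbar)"
    using H psd Xbar_S by (auto intro!: Sn_add Sn_scaleR simp: minner_inner inner_add_right)
  then have "?obj (Xh m w) \<le> ?obj (Xbar + \<rho> m *\<^sub>R H)" using Xh_opt w by blast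
  moreover have shift: "?obj (Xbar + \<rho> m *\<^sub>R D) = ?obj Xbar + (\<rho> m)\<^sup>2 * \<psi> m w D" for D
    by (rule est_obj_shift) (use r in simp)
  moreover have "Xh m w = Xbar + \<rho> m *\<^sub>R err m w" using r by simp
  then have "?obj (Xh m w) = ?obj Xbar + (\<rho> m)\<^sup>2 * \<psi> m w (err m w)" by (metis shift)
  ultimately have "(\<rho> m)\<^sup>2 * \<psi> m w (err m w) \<le> (\<rho> m)\<^sup>2 * \<psi> m w H" by simp
  then show ?thesis using r by simp
qed

lemma exists_slater_direction:
  assumes Dh: "Dh \<in> Kdir" and \<tau>: "\<tau> > 0"
  shows "\<exists>H t0. H \<in> Sn realcase \<and> (\<forall>k\<in>\<alpha>. \<Theta> k \<bullet> H = 0) \<and> t0 > 0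
    \<and> (\<forall>t. 0 \<le> t \<and> t \<le> t0 \<longrightarrow> psd (Xbar + t *\<^sub>R H)) \<and> \<phi> H - \<phi> Dh \<le> \<tau>"
proof -
  obtain X0 where X0: "X0 \<in> Sn realcase" "pd X0" "\<forall>k\<in>\<alpha>. minner (\<Theta> k) X0 = minner (\<Theta> k) Xbar"
    using slater by blast
  let ?E = "X0 - Xbar"
  have "isCont (\<lambda>x. \<phi> (Dh + x *\<^sub>R ?E)) 0"
    unfolding limit_fun_def qbeta_form_def by (intro continuous_intros)
  then obtain \<delta> where \<delta>: "\<delta> > 0"
    "\<forall>x. dist x 0 < \<delta> \<longrightarrow> dist (\<phi> (Dh + x *\<^sub>R ?E)) (\<phi> (Dh + 0 *\<^sub>R ?E)) < \<tau>"
    using \<tau> unfolding continuous_at_eps_delta by blast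
  define \<epsilon> where "\<epsilon> = \<delta> / 2"
  have \<epsilon>: "\<epsilon> > 0" "dist \<epsilon> 0 < \<delta>" using \<delta> by (auto simp: \<epsilon>_def)
  define H where "H = Dh + \<epsilon> *\<^sub>R ?E"
  have "dist (\<phi> H) (\<phi> Dh) < \<tau>" using \<delta>(2) \<epsilon>(2) unfolding H_def by fastforce
  then have "\<phi> H - \<phi> Dh \<le> \<tau>" by (simp add: dist_real_def)
  moreover obtain lm where "lm > 0" "\<forall>i. pos i < r \<longrightarrow> eigvals Xbar $ i \<ge> lm"
    using eigvals_rank_split(2)[OF Xbar_psd rank_Xbar r_pos Pbar_unitary Xbar_decomp] by blast
  then obtain t0 where "t0 > 0" "\<forall>t. 0 \<le> t \<and> t \<le> t0 \<longrightarrow> psd (Xbar + t *\<^sub>R H)"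
    using psd_along_slater_perturbation[OF Pbar_unitary Xbar_decomp eigvals_Xbar_tail _ _ Xbar_S
        Dh X0(1,2) \<epsilon>(1)]
    unfolding H_def by blast
  moreover have DhS: "Dh \<in> Sn realcase" and "\<forall>k\<in>\<alpha>. \<Theta> k \<bullet> Dh = 0"
    using Dh unfolding dir_cone_alt by auto
  then have "H \<in> Sn realcase" "\<forall>k\<in>\<alpha>. \<Theta> k \<bullet> H = 0"
    using X0 Xbar_S unfolding H_def
    by (auto intro!: Sn_add Sn_scaleR Sn_diff simp: inner_add_right inner_diff_right minner_inner)
  ultimately show ?thesis by blast
qed

context
  fixes c e Dh H t0 a0 b0
  assumes c: "c > 0" and e: "e > 0" and Dh: "Dh \<in> Kdir"
    and strong: "\<forall>D\<in>Kdir. \<phi> D \<ge> \<phi> Dh + c * (norm (D - Dh))\<^sup>2"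
    and H: "H \<in> Sn realcase" "\<forall>k\<in>\<alpha>. \<Theta> k \<bullet> H = 0"
    and t0: "\<forall>t. 0 \<le> t \<and> t \<le> t0 \<longrightarrow> psd (Xbar + t *\<^sub>R H)"
    and a0: "a0 > 0" "a0 \<le> c / 4" and b0: "b0 > 0" "b0 \<le> c * e / 4"
    and T0: "\<phi> H - \<phi> Dh + a0 * (norm H)\<^sup>2 + b0 * norm H + 2 * a0 * (norm Dh)\<^sup>2 + b0 * norm Dh
               \<le> c * e\<^sup>2 / 8"
begin

lemma err_close_on_good_sample:
  assumes m: "m > 0" and K: "K > 0" and rt: "\<rho> m \<le> t0" and rK: "\<rho> m * K \<le> a0"
    and s2: "real (card \<beta>) * s2 \<le> a0" and s4: "3 * \<nu> * real (card \<beta>) * s4 \<le> b0"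
    and w: "w \<in> space M"
    and n1: "\<forall>i<m. \<omega> i w \<in> \<beta>"
    and n2: "\<forall>k\<in>\<beta>. \<bar>label_count (\<lambda>i. \<omega> i w) m k / real m - p k\<bar> \<le> s2"
    and n3: "\<bar>\<gamma> m w\<bar> \<le> K"
    and n4: "\<forall>k\<in>\<beta>. \<bar>label_noise (\<lambda>i. \<omega> i w) (\<lambda>i. \<xi> i w) m k / (real m * \<rho> m)\<bar> \<le> s4"
    and n5: "dist (spectral_op f (Xt m w)) (spectral_op f Xbar) \<le> b0 / 3"
    and n6: "dist (Xt m w) Xbar \<le> b0 / (3 * K)"
  shows "dist (err m w) Dh \<le> e"
proof -
  have r: "\<rho> m > 0" and g: "\<gamma> m w \<ge> 0" using \<rho>_pos \<gamma>_nonneg w by auto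
  have "(\<Sum>k\<in>\<beta>. \<bar>label_count (\<lambda>i. \<omega> i w) m k / real m - p k\<bar>) \<le> card \<beta> * s2"
    using sum_mono[of \<beta> _ "\<lambda>_. s2"] n2 by simp
  moreover have "\<rho> m * \<gamma> m w \<le> \<rho> m * K" using n3 g r by (intro mult_left_mono) auto
  ultimately have aA: "1/2 * (\<Sum>k\<in>\<beta>. \<bar>label_count (\<lambda>i. \<omega> i w) m k / real m - p k\<bar>)
      + \<rho> m * \<gamma> m w / 2 \<le> a0"
    using s2 rK by linarith
  have "(\<Sum>k\<in>\<beta>. \<bar>label_noise (\<lambda>i. \<omega> i w) (\<lambda>i. \<xi> i w) m k / (real m * \<rho> m)\<bar>) \<le> card \<beta> * s4"
    using sum_mono[of \<beta> _ "\<lambda>_. s4"] n4 by simp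
  then have "\<nu> * (\<Sum>k\<in>\<beta>. \<bar>label_noise (\<lambda>i. \<omega> i w) (\<lambda>i. \<xi> i w) m k / (real m * \<rho> m)\<bar>)
      \<le> \<nu> * (card \<beta> * s4)"
    using \<nu>_pos by (intro mult_left_mono) auto
  moreover have "norm ((mat 1 - spectral_op f (Xt m w)) - Gbar) \<le> b0 / 3"
    using n5 by (simp add: dist_norm norm_minus_commute)
  moreover have "\<gamma> m w * norm (Xbar - Xt m w) \<le> K * (b0 / (3 * K))"
    using n3 n6 g by (intro mult_mono) (auto simp: dist_norm norm_minus_commute)
  ultimately have bB: "\<nu> * (\<Sum>k\<in>\<beta>. \<bar>label_noise (\<lambda>i. \<omega> i w) (\<lambda>i. \<xi> i w) m k / (real m * \<rho> m)\<bar>)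
      + norm ((mat 1 - spectral_op f (Xt m w)) - Gbar) + \<gamma> m w * norm (Xbar - Xt m w) \<le> b0"
    using s4 K by (simp add: mult_ac)
  have bsub: "\<beta> \<subseteq> {1..d}" using beta_def by auto
  have dev: "\<bar>\<psi> m w D - \<phi> D\<bar> \<le> a0 * (norm D)\<^sup>2 + b0 * norm D" for D
    using aA bB
    by (intro order_trans[OF scaled_obj_deviation[OF n1 finite_beta bsub basis_orth r g
          less_imp_le[OF \<nu>_pos]]] add_mono mult_right_mono) auto
  have "norm (err m w - Dh) \<le> e"
  proof (rule close_to_min_of_uniform_approx[OF c e _ \<psi>_err_le[OF w H] dev
        less_imp_le[OF a0(1)] a0(2) less_imp_le[OF b0(1)] b0(2) T0])
    show "\<phi> (err m w) \<ge> \<phi> Dh + c * (norm (err m w - Dh))\<^sup>2" using strong err_in_Kdir[OF w] by blast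
    show "psd (Xbar + \<rho> m *\<^sub>R H)" using t0 r rt by auto
  qed
  then show ?thesis by (simp add: dist_norm)
qed

lemma large_err_imp_bad_sample:
  assumes \<eta>: "\<eta> > 0" "\<forall>X\<in>{X\<in>Sn realcase. psd X}. dist X Xbar < \<eta>
                  \<longrightarrow> dist (spectral_op f X) (spectral_op f Xbar) < b0 / 3"
    and m: "m > 0" and K: "K > 0" and rt: "\<rho> m \<le> t0" and rK: "\<rho> m * K \<le> a0"
    and s2: "real (card \<beta>) * s2 \<le> a0" and s4: "3 * \<nu> * real (card \<beta>) * s4 \<le> b0"
    and w: "w \<in> space M" and large: "e < dist (err m w) Dh"
  shows "(\<exists>i<m. \<omega> i w \<notin> \<beta>)
    \<or> (\<exists>k\<in>\<beta>. \<bar>label_count (\<lambda>i. \<omega> i w) m k / real m - p k\<bar> > s2)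
    \<or> \<bar>\<gamma> m w\<bar> > K
    \<or> (\<exists>k\<in>\<beta>. \<bar>label_noise (\<lambda>i. \<omega> i w) (\<lambda>i. \<xi> i w) m k / (real m * \<rho> m)\<bar> > s4)
    \<or> dist (Xt m w) Xbar > \<eta> / 2 \<or> dist (Xt m w) Xbar > b0 / (3 * K)"
proof (rule ccontr)
  assume "\<not> ?thesis"
  then have n: "\<forall>i<m. \<omega> i w \<in> \<beta>"
    "\<forall>k\<in>\<beta>. \<bar>label_count (\<lambda>i. \<omega> i w) m k / real m - p k\<bar> \<le> s2"
    "\<bar>\<gamma> m w\<bar> \<le> K"
    "\<forall>k\<in>\<beta>. \<bar>label_noise (\<lambda>i. \<omega> i w) (\<lambda>i. \<xi> i w) m k / (real m * \<rho> m)\<bar> \<le> s4"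
    "dist (Xt m w) Xbar \<le> \<eta> / 2" "dist (Xt m w) Xbar \<le> b0 / (3 * K)"
    unfolding de_Morgan_disj not_less[symmetric] by blast+
  have "dist (Xt m w) Xbar < \<eta>" using n(5) \<eta>(1) by simp
  moreover have "Xt m w \<in> {X\<in>Sn realcase. psd X}" using Xt_psd w by blast
  ultimately have "dist (spectral_op f (Xt m w)) (spectral_op f Xbar) \<le> b0 / 3"
    using \<eta>(2) by (meson less_imp_le)
  then have "dist (err m w) Dh \<le> e"
    using err_close_on_good_sample[OF m K rt rK s2 s4 w n(1-4) _ n(6)] by blast
  then show False using large by simp
qed

lemma measure_large_err_le:
  assumes \<eta>: "\<eta> > 0" "\<forall>X\<in>{X\<in>Sn realcase. psd X}. dist X Xbar < \<eta>
                  \<longrightarrow> dist (spectral_op f X) (spectral_op f Xbar) < b0 / 3"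
    and m: "m > 0" and K: "K > 0" and rt: "\<rho> m \<le> t0" and rK: "\<rho> m * K \<le> a0"
    and s2: "s2 > 0" "real (card \<beta>) * s2 \<le> a0" and s4: "s4 > 0" "3 * \<nu> * real (card \<beta>) * s4 \<le> b0"
  shows "measure M {w\<in>space M. e < dist (err m w) Dh}
     \<le> card \<beta> / s2\<^sup>2 / real m + measure M {w\<in>space M. \<bar>\<gamma> m w\<bar> > K}
       + card \<beta> / s4\<^sup>2 / (real m * (\<rho> m)\<^sup>2)
       + measure M {w\<in>space M. dist (Xt m w) Xbar > \<eta> / 2}
       + measure M {w\<in>space M. dist (Xt m w) Xbar > b0 / (3 * K)}"
proof -
  have rm: "\<rho> m > 0" using \<rho>_pos by blast
  define B1 where "B1 = {w\<in>space M. \<exists>i<m. \<omega> i w \<notin> \<beta>}"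
  define B2 where "B2 = (\<Union>k\<in>\<beta>. {w\<in>space M. \<bar>label_count (\<lambda>i. \<omega> i w) m k / real m - p k\<bar> > s2})"
  define B3 where "B3 = {w\<in>space M. \<bar>\<gamma> m w\<bar> > K}"
  define B4 where "B4 = (\<Union>k\<in>\<beta>. {w\<in>space M.
                      \<bar>label_noise (\<lambda>i. \<omega> i w) (\<lambda>i. \<xi> i w) m k / (real m * \<rho> m)\<bar> > s4})"
  define B5 where "B5 = {w\<in>space M. dist (Xt m w) Xbar > \<eta> / 2}"
  define B6 where "B6 = {w\<in>space M. dist (Xt m w) Xbar > b0 / (3 * K)}"
  have sets: "B1 \<in> sets M" "B2 \<in> sets M" "B3 \<in> sets M" "B4 \<in> sets M" "B5 \<in> sets M" "B6 \<in> sets M"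
  proof -
    have "B1 = (\<Union>i\<in>{..<m}. {w\<in>space M. \<omega> i w \<notin> \<beta>})" unfolding B1_def by auto
    then show "B1 \<in> sets M" by (auto intro!: sets.finite_UN)
    show "B2 \<in> sets M" "B4 \<in> sets M" unfolding B2_def B4_def label_count_def label_noise_def
      using finite_beta by (auto intro!: sets.finite_UN)
    show "B3 \<in> sets M" "B5 \<in> sets M" "B6 \<in> sets M" unfolding B3_def B5_def B6_def by measurable
  qed
  have "{w\<in>space M. e < dist (err m w) Dh} \<subseteq> B1 \<union> B2 \<union> B3 \<union> B4 \<union> B5 \<union> B6"
    using large_err_imp_bad_sample[OF \<eta> m K rt rK s2(2) s4(2)]
    unfolding B1_def B2_def B3_def B4_def B5_def B6_def by blast
  then have "measure M {w\<in>space M. e < dist (err m w) Dh} \<le> measure M (B1 \<union> B2 \<union> B3 \<union> B4 \<union> B5 \<union> B6)"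
    using sets by (intro finite_measure_mono) auto
  also have "\<dots> \<le> measure M B1 + measure M B2 + measure M B3 + measure M B4 + measure M B5 + measure M B6"
    using sets by (intro order_trans[OF measure_Un_le] add_mono) (auto intro!: sets.Un)
  also have "measure M B1 = 0" unfolding B1_def by (rule prob_label_outside_beta[OF finite_beta p_sum])
  also have "measure M B2 \<le> card \<beta> / s2\<^sup>2 / real m"
  proof -
    have "measure M B2 \<le> (\<Sum>k\<in>\<beta>. measure M
        {w\<in>space M. \<bar>label_count (\<lambda>i. \<omega> i w) m k / real m - p k\<bar> > s2})"
      unfolding B2_def using finite_beta
      by (intro measure_UNION_le) (auto simp: label_count_def)
    also have "\<dots> \<le> (\<Sum>k\<in>\<beta>. 1 / (real m * s2\<^sup>2))"
      by (intro sum_mono prob_label_freq_deviation m s2)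
    finally show ?thesis by (simp add: mult.commute)
  qed
  also have "measure M B4 \<le> card \<beta> / s4\<^sup>2 / (real m * (\<rho> m)\<^sup>2)"
  proof -
    have "measure M B4 \<le> (\<Sum>k\<in>\<beta>. measure M {w\<in>space M.
        \<bar>label_noise (\<lambda>i. \<omega> i w) (\<lambda>i. \<xi> i w) m k / (real m * \<rho> m)\<bar> > s4})"
      unfolding B4_def using finite_beta
      by (intro measure_UNION_le) (auto simp: label_noise_def)
    also have "\<dots> \<le> (\<Sum>k\<in>\<beta>. 1 / (real m * (\<rho> m)\<^sup>2 * s4\<^sup>2))"
      by (intro sum_mono prob_label_noise_deviation m s4 rm)
    finally show ?thesis by (simp add: mult_ac)
  qed
  finally show ?thesis unfolding B3_def B5_def B6_def by simp
qed

lemma measure_large_err_tendsto_zero: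
  assumes \<eta>: "\<eta> > 0" "\<forall>X\<in>{X\<in>Sn realcase. psd X}. dist X Xbar < \<eta>
                  \<longrightarrow> dist (spectral_op f X) (spectral_op f Xbar) < b0 / 3"
    and "t0 > 0"
    and s2: "s2 > 0" "real (card \<beta>) * s2 \<le> a0" and s4: "s4 > 0" "3 * \<nu> * real (card \<beta>) * s4 \<le> b0"
  shows "(\<lambda>m. measure M {w\<in>space M. e < dist (err m w) Dh}) \<longlonglongrightarrow> 0"
proof (rule tendstoI)
  fix \<epsilon> :: real assume "\<epsilon> > 0"
  define \<epsilon>' where "\<epsilon>' = \<epsilon> / 5"
  have "\<epsilon>' > 0" using \<open>\<epsilon> > 0\<close> by (simp add: \<epsilon>'_def)
  obtain K1 N1 where KN: "\<forall>m\<ge>N1. measure M {w\<in>space M. \<bar>\<gamma> m w\<bar> > K1} < \<epsilon>'"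
    using \<gamma>_Op1 \<open>\<epsilon>' > 0\<close> unfolding bounded_prob_def by blast
  define K where "K = max K1 1"
  have K: "K > 0" "K \<ge> K1" by (auto simp: K_def)
  have "measure M {w\<in>space M. \<bar>\<gamma> m w\<bar> > K} \<le> measure M {w\<in>space M. \<bar>\<gamma> m w\<bar> > K1}" for m
    using K(2) by (intro finite_measure_mono) auto
  then have ev_\<gamma>: "eventually (\<lambda>m. measure M {w\<in>space M. \<bar>\<gamma> m w\<bar> > K} < \<epsilon>') sequentially"
    using KN unfolding eventually_sequentially by (meson order_le_less_trans)
  have "min t0 (a0 / K) > 0" using \<open>t0 > 0\<close> a0(1) K(1) by simp
  then have "eventually (\<lambda>m. \<rho> m < min t0 (a0 / K)) sequentially"
    by (rule order_tendstoD(2)[OF \<rho>_lim])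
  then have ev_\<rho>: "eventually (\<lambda>m. \<rho> m \<le> t0 \<and> \<rho> m * K \<le> a0) sequentially"
    by eventually_elim (use K(1) in \<open>auto simp: less_divide_eq\<close>)
  have "((\<lambda>m. card \<beta> / s2\<^sup>2 / real m) \<longlongrightarrow> 0) sequentially"
    by (intro tendsto_divide_0[OF tendsto_const] filterlim_at_top_imp_at_infinity
        filterlim_real_sequentially)
  then have ev_freq: "eventually (\<lambda>m. card \<beta> / s2\<^sup>2 / real m < \<epsilon>') sequentially"
    using order_tendstoD(2) \<open>\<epsilon>' > 0\<close> by blast
  have "filterlim (\<lambda>m. (sqrt (real m) * \<rho> m) ^ 2) at_top sequentially"
    by (rule filterlim_pow_at_top[OF _ \<rho>_sqrt]) simp
  then have "filterlim (\<lambda>m. real m * (\<rho> m)\<^sup>2) at_top sequentially"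
    by (simp add: power_mult_distrib)
  then have "((\<lambda>m. card \<beta> / s4\<^sup>2 / (real m * (\<rho> m)\<^sup>2)) \<longlongrightarrow> 0) sequentially"
    by (intro tendsto_divide_0[OF tendsto_const] filterlim_at_top_imp_at_infinity)
  then have ev_noise: "eventually (\<lambda>m. card \<beta> / s4\<^sup>2 / (real m * (\<rho> m)\<^sup>2) < \<epsilon>') sequentially"
    using order_tendstoD(2) \<open>\<epsilon>' > 0\<close> by blast
  have "\<eta> / 2 > 0" "b0 / (3 * K) > 0" using \<eta>(1) b0(1) K(1) by simp_all
  then have ev_Xt: "eventually (\<lambda>m. measure M {w\<in>space M. dist (Xt m w) Xbar > \<eta> / 2} < \<epsilon>') sequentially"
    "eventually (\<lambda>m. measure M {w\<in>space M. dist (Xt m w) Xbar > b0 / (3 * K)} < \<epsilon>') sequentially"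
    using Xt_conv order_tendstoD(2) \<open>\<epsilon>' > 0\<close> unfolding conv_prob_def by blast+
  have ev_m: "eventually (\<lambda>m. m > 0) sequentially" by (rule eventually_gt_at_top)
  show "eventually (\<lambda>m. dist (measure M {w\<in>space M. e < dist (err m w) Dh}) 0 < \<epsilon>) sequentially"
    using ev_m ev_\<rho> ev_\<gamma> ev_freq ev_noise ev_Xt
  proof eventually_elim
    case (elim m)
    then have "measure M {w\<in>space M. e < dist (err m w) Dh} < 5 * \<epsilon>'"
      using measure_large_err_le[OF \<eta> _ K(1) _ _ s2 s4, of m] by linarith
    then show ?case by (simp add: \<epsilon>'_def)
  qed
qed

end

lemma err_conv_prob:
  assumes c: "c > 0" and Dh: "Dh \<in> Kdir"
    and strong: "\<forall>D\<in>Kdir. \<phi> D \<ge> \<phi> Dh + c * (norm (D - Dh))\<^sup>2"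
  shows "conv_prob M (\<lambda>m w. err m w) Dh"
  unfolding conv_prob_def
proof (intro allI impI)
  fix e :: real assume e: "e > 0"
  obtain H t0 where H: "H \<in> Sn realcase" "\<forall>k\<in>\<alpha>. \<Theta> k \<bullet> H = 0"
    and t0: "t0 > 0" "\<forall>t. 0 \<le> t \<and> t \<le> t0 \<longrightarrow> psd (Xbar + t *\<^sub>R H)"
    and \<phi>H: "\<phi> H - \<phi> Dh \<le> c * e\<^sup>2 / 16"
    using exists_slater_direction[OF Dh, of "c * e\<^sup>2 / 16"] c e by auto
  obtain a0 b0 where ab: "a0 > 0" "a0 \<le> c / 4" "b0 > 0" "b0 \<le> c * e / 4"
    "a0 * ((norm H)\<^sup>2 + 2 * (norm Dh)\<^sup>2) + b0 * (norm H + norm Dh) \<le> c * e\<^sup>2 / 16"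
    using exists_deviation_budget[OF c e, of "(norm H)\<^sup>2 + 2 * (norm Dh)\<^sup>2" "norm H + norm Dh"] by auto
  have T0: "\<phi> H - \<phi> Dh + a0 * (norm H)\<^sup>2 + b0 * norm H + 2 * a0 * (norm Dh)\<^sup>2 + b0 * norm Dh
      \<le> c * e\<^sup>2 / 8"
    using \<phi>H ab(5) by (simp add: algebra_simps)
  obtain \<eta> where \<eta>: "\<eta> > 0" "\<forall>X\<in>{X\<in>Sn realcase. psd X}. dist X Xbar < \<eta>
      \<longrightarrow> dist (spectral_op f X) (spectral_op f Xbar) < b0 / 3"
    using F_cont ab(3) unfolding continuous_within_eps_delta by (meson divide_pos_pos zero_less_numeral)
  define s2 where "s2 = a0 / card \<beta>"
  define s4 where "s4 = b0 / (3 * \<nu> * card \<beta>)"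
  have "s2 > 0" "real (card \<beta>) * s2 \<le> a0" "s4 > 0" "3 * \<nu> * real (card \<beta>) * s4 \<le> b0"
    using ab card_beta_pos \<nu>_pos by (simp_all add: s2_def s4_def)
  then show "(\<lambda>m. measure M {w\<in>space M. e < dist (err m w) Dh}) \<longlonglongrightarrow> 0"
    by (intro measure_large_err_tendsto_zero[OF c e Dh strong H t0(2) ab(1-4) T0 \<eta> t0(1)])
qed

end

theorem mainTheorem12:
  fixes realcase :: bool
    and \<Theta> :: "nat \<Rightarrow> ('n::{finite,linorder}) cmat"
    and d :: nat and \<alpha> \<beta> :: "nat set" and p :: "nat \<Rightarrow> real"
    and Xbar Pbar :: "'n cmat" and r :: nat
    and M :: "'a measure"
    and \<omega> :: "nat \<Rightarrow> 'a \<Rightarrow> nat" and \<xi> :: "nat \<Rightarrow> 'a \<Rightarrow> real" and \<nu> :: real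
    and f :: "(real, 'n) vec \<Rightarrow> (real, 'n) vec"
    and Xt Xh :: "nat \<Rightarrow> 'a \<Rightarrow> 'n cmat"
    and \<rho> :: "nat \<Rightarrow> real" and \<gamma> :: "nat \<Rightarrow> 'a \<Rightarrow> real"
  assumes basis_in: "\<forall>k\<in>{1..d}. \<Theta> k \<in> Sn realcase"
    and basis_orth: "\<forall>k\<in>{1..d}. \<forall>l\<in>{1..d}. minner (\<Theta> k) (\<Theta> l) = (if k = l then 1 else 0)"
    and basis_span: "\<forall>X\<in>Sn realcase. \<exists>c. X = (\<Sum>k=1..d. c k *\<^sub>R \<Theta> k)"
    and alpha_sub: "\<alpha> \<subseteq> {1..d}"
    and beta_def: "\<beta> = {1..d} - \<alpha>"
    and p_pos: "\<forall>k\<in>\<beta>. p k > 0"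
    and p_sum: "(\<Sum>k\<in>\<beta>. p k) = 1"
    and Xbar_S: "Xbar \<in> Sn realcase" and Xbar_psd: "psd Xbar"
    and rank_Xbar: "rank Xbar = r" and r_pos: "r \<ge> 1"
    and Pbar_unitary: "unitary Pbar"
    and Pbar_real: "realcase \<longrightarrow> (\<forall>i j. Im (Pbar $ i $ j) = 0)"
    and Xbar_decomp: "Xbar = Pbar ** diagm (eigvals Xbar) ** ctrans Pbar"
    and prob: "prob_space M"
    and \<omega>_rv: "\<forall>i. \<omega> i \<in> measurable M (count_space UNIV)"
    and \<xi>_rv: "\<forall>i. \<xi> i \<in> borel_measurable M"
    and indep: "prob_space.indep_vars M
                  (\<lambda>j. case j of Inl _ \<Rightarrow> borel | Inr _ \<Rightarrow> borel)
                  (\<lambda>j. case j of Inl i \<Rightarrow> (\<lambda>w. real (\<omega> i w)) | Inr i \<Rightarrow> \<xi> i) UNIV"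
    and \<omega>_dist_beta: "\<forall>i. \<forall>k\<in>\<beta>. measure M {w\<in>space M. \<omega> i w = k} = p k"
    and \<omega>_dist_alpha: "\<forall>i. \<forall>k\<in>\<alpha>. measure M {w\<in>space M. \<omega> i w = k} = 0"
    and \<xi>_ident: "\<forall>i. distr M borel (\<xi> i) = distr M borel (\<xi> 0)"
    and \<xi>_int: "\<forall>i. integrable M (\<xi> i) \<and> integrable M (\<lambda>w. (\<xi> i w)\<^sup>2)"
    and \<xi>_mean: "\<forall>i. prob_space.expectation M (\<xi> i) = 0"
    and \<xi>_var: "\<forall>i. prob_space.expectation M (\<lambda>w. (\<xi> i w)\<^sup>2) = 1"
    and \<nu>_pos: "\<nu> > 0"
    and f_sym: "symmetric_fun f"
    and F_cont: "continuous (at Xbar within {X\<in>Sn realcase. psd X}) (spectral_op f)"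
    and Xt_rv: "\<forall>m. Xt m \<in> borel_measurable M"
    and Xt_psd: "\<forall>m. \<forall>w\<in>space M. Xt m w \<in> Sn realcase \<and> psd (Xt m w)"
    and Xt_conv: "conv_prob M Xt Xbar"
    and \<rho>_pos: "\<forall>m. \<rho> m > 0"
    and \<gamma>_rv: "\<forall>m. \<gamma> m \<in> borel_measurable M"
    and \<gamma>_nonneg: "\<forall>m. \<forall>w\<in>space M. \<gamma> m w \<ge> 0"
    and Xh_rv: "\<forall>m. Xh m \<in> borel_measurable M"
    and Xh_opt: "\<forall>m. \<forall>w\<in>space M.
       (Xh m w \<in> Sn realcase \<and> psd (Xh m w) \<and>
        (\<forall>k\<in>\<alpha>. minner (\<Theta> k) (Xh m w) = minner (\<Theta> k) Xbar)) \<and>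
       (\<forall>X. X \<in> Sn realcase \<and> psd X \<and> (\<forall>k\<in>\<alpha>. minner (\<Theta> k) X = minner (\<Theta> k) Xbar) \<longrightarrow>
          est_obj \<Theta> f m (\<lambda>i. minner (\<Theta> (\<omega> i w)) Xbar + \<nu> * \<xi> i w) (\<lambda>i. \<omega> i w)
                  (\<rho> m) (\<gamma> m w) (Xt m w) (Xh m w)
          \<le> est_obj \<Theta> f m (\<lambda>i. minner (\<Theta> (\<omega> i w)) Xbar + \<nu> * \<xi> i w) (\<lambda>i. \<omega> i w)
                  (\<rho> m) (\<gamma> m w) (Xt m w) X)"
    and slater: "\<exists>X0\<in>Sn realcase. pd X0 \<and> (\<forall>k\<in>\<alpha>. minner (\<Theta> k) X0 = minner (\<Theta> k) Xbar)"
    and \<rho>_lim: "\<rho> \<longlonglongrightarrow> 0"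
    and \<rho>_sqrt: "filterlim (\<lambda>m. sqrt (real m) * \<rho> m) at_top sequentially"
    and \<gamma>_Op1: "bounded_prob M \<gamma>"
  shows "\<exists>Dh. (Dh \<in> Sn realcase \<and> (\<forall>k\<in>\<alpha>. minner (\<Theta> k) Dh = 0) \<and> psd (lower_block r Pbar Dh)
              \<and> (\<forall>D. D \<in> Sn realcase \<and> (\<forall>k\<in>\<alpha>. minner (\<Theta> k) D = 0) \<and> psd (lower_block r Pbar D)
                     \<longrightarrow> limit_obj \<Theta> \<beta> p f Xbar Dh \<le> limit_obj \<Theta> \<beta> p f Xbar D))
          \<and> (\<forall>D. D \<in> Sn realcase \<and> (\<forall>k\<in>\<alpha>. minner (\<Theta> k) D = 0) \<and> psd (lower_block r Pbar D)
                 \<and> (\<forall>D'. D' \<in> Sn realcase \<and> (\<forall>k\<in>\<alpha>. minner (\<Theta> k) D' = 0) \<and> psd (lower_block r Pbar D')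
                        \<longrightarrow> limit_obj \<Theta> \<beta> p f Xbar D \<le> limit_obj \<Theta> \<beta> p f Xbar D')
                 \<longrightarrow> D = Dh)
          \<and> conv_prob M (\<lambda>m w. (1 / \<rho> m) *\<^sub>R (Xh m w - Xbar)) Dh"
proof -
  interpret estimation_setting M \<omega> \<xi> p \<beta> realcase \<Theta> d \<alpha> Xbar Pbar r \<nu> f Xt Xh \<rho> \<gamma>
    using prob \<omega>_rv \<xi>_rv indep \<omega>_dist_beta \<xi>_int \<xi>_mean \<xi>_var basis_orth basis_span beta_def p_pos
      p_sum Xbar_S Xbar_psd rank_Xbar r_pos Pbar_unitary Xbar_decomp \<nu>_pos F_cont Xt_rv Xt_psd Xt_conv
      \<rho>_pos \<gamma>_rv \<gamma>_nonneg Xh_opt slater \<rho>_lim \<rho>_sqrt \<gamma>_Op1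
    by (simp add: estimation_setting_def estimation_setting_axioms_def sampling_model_def
        sampling_model_axioms_def)
  obtain c Dh where c: "c > 0" and Dh: "Dh \<in> Kdir" and opt: "\<forall>D\<in>Kdir. \<phi> Dh \<le> \<phi> D"
    and strong: "\<forall>D\<in>Kdir. \<phi> D \<ge> \<phi> Dh + c * (norm (D - Dh))\<^sup>2"
    using limit_problem_min by blast
  have unique: "D = Dh" if "D \<in> Kdir" "\<forall>D'\<in>Kdir. \<phi> D \<le> \<phi> D'" for D
    using strong_min_unique[OF c strong] that Dh by blast
  show ?thesis
    using Dh opt unique err_conv_prob[OF c Dh strong]
    unfolding limit_obj_eq_limit_fun dir_cone_def Ball_def mem_Collect_eq
    by (intro exI[of _ Dh]) blast
qed

end
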